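(* Let $Y$ be an $\mathbb{R}^d$-valued random variable, $\pi:\mathbb{R}^d\to\mathbb{R}$ measurable, and $X$ a real-valued random variable; write $U_1(Y)=\mathbb{E}[X\mid Y]$. Assume that for some $q>2$, $\mathbb{E}[|X|^q]+\mathbb{E}[|\pi(Y)|^q]<\infty$, and that there exist $\bar\delta,\bar\rho>0$ such that $\mathbb{P}(|U_1(Y)-\pi(Y)|<x)\le\bar\rho x$ for all $x<\bar\delta$. Let $M_\ell=M_0 2^\ell$ for a fixed positive integer $M_0$. For $\ell\ge1$ let $\widehat E^{(0)}_{\ell-1}(Y)$ and $\widehat E^{(1)}_{\ell-1}(Y)$ be conditionally independent given $Y$, each being an average $M_{\ell-1}^{-1}\sum_{n=1}^{M_{\ell-1}}X^{(n)}(Y)$ of $M_{\ell-1}$ samples of $X$ that are conditionally independent given $Y$ and each have the conditional law of $X$ given $Y$. Define \[ \Delta^{\mathrm{ant}}_\ell(Y)=\max\left\{\tfrac12\big(\widehat E^{(0)}_{\ell-1}(Y)+\widehat E^{(1)}_{\ell-1}(Y)\big),\pi(Y)\right\}-\frac12\sum_{i=0}^1\max\left\{\widehat E^{(i)}_{\ell-1}(Y),\pi(Y)\right\}. \] Then there is $b_1>0$, independent of $\ell$, such that for $1\le p\le q$, \[ \mathbb{E}\left[|\Delta^{\mathrm{ant}}_\ell(Y)|^p\right]\le b_1\,2^{-q(1+p^{-1})p\ell/(2(q+1))}. \] *)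

theory Defs
  imports "HOL-Probability.Probability"
begin

definition sigma_rv :: "'a measure \<Rightarrow> ('a \<Rightarrow> 'b::topological_space) \<Rightarrow> 'a measure" where
  "sigma_rv M Y = vimage_algebra (space M) Y borel"

text \<open>The random variables Xs i (i in the finite index set I) are conditionally independent
  given Y and each has the conditional law of X given Y.\<close>
definition cond_iid_copies ::
  "'a measure \<Rightarrow> ('a \<Rightarrow> 'b::topological_space) \<Rightarrow> ('a \<Rightarrow> real) \<Rightarrow> 'i set \<Rightarrow> ('i \<Rightarrow> 'a \<Rightarrow> real) \<Rightarrow> bool" where
  "cond_iid_copies M Y X I Xs \<longleftrightarrow>
     (\<forall>i\<in>I. Xs i \<in> borel_measurable M) \<and>
     (\<forall>A \<in> sets borel. \<forall>B. (\<forall>i\<in>I. B i \<in> sets borel) \<longrightarrow>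
        measure M {\<omega> \<in> space M. Y \<omega> \<in> A \<and> (\<forall>i\<in>I. Xs i \<omega> \<in> B i)} =
        (\<integral>\<omega>. indicator A (Y \<omega>) *
              (\<Prod>i\<in>I. real_cond_exp M (sigma_rv M Y) (\<lambda>\<omega>'. indicator (B i) (X \<omega>')) \<omega>) \<partial>M))"

definition Mlev :: "nat \<Rightarrow> nat \<Rightarrow> nat" where
  "Mlev M0 l = M0 * 2 ^ l"

definition Ehat :: "nat \<Rightarrow> nat \<Rightarrow> (nat \<times> nat \<Rightarrow> 'a \<Rightarrow> real) \<Rightarrow> nat \<Rightarrow> 'a \<Rightarrow> real" where
  "Ehat M0 l Xs i \<omega> = (\<Sum>n<Mlev M0 (l - 1). Xs (i, n) \<omega>) / real (Mlev M0 (l - 1))"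

definition Delta_ant :: "nat \<Rightarrow> nat \<Rightarrow> (nat \<times> nat \<Rightarrow> 'a \<Rightarrow> real) \<Rightarrow> ('a \<Rightarrow> real) \<Rightarrow> 'a \<Rightarrow> real" where
  "Delta_ant M0 l Xs piY \<omega> =
     max ((Ehat M0 l Xs 0 \<omega> + Ehat M0 l Xs 1 \<omega>) / 2) (piY \<omega>)
     - (1/2) * (\<Sum>i\<in>{0,1::nat}. max (Ehat M0 l Xs i \<omega>) (piY \<omega>))"

end

theory Submission
  imports Defs
begin

text \<open>
  The antithetic difference vanishes unless \<pi>(Y) lies strictly between the two inner estimates,
  and it never exceeds their spread. Hence, for every threshold t, |\<Delta>|^p is at most
  t^(p-q) D^q plus t^p on the event |U_1(Y) - \<pi>(Y)| < t, where D is the sum of the errors of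
  the two inner estimates. Each error is an average of M_(l-1) samples which, centred at U_1(Y),
  are martingale differences with respect to their own history, so a Burkholder-type inequality
  gives E D^q = O(M_(l-1)^(-q/2)). The margin condition bounds the second term by \<rho> t^(p+1),
  and t = M_(l-1)^(-q/(2(q+1))) balances the two terms.
\<close>

section \<open>Elementary inequalities\<close>

lemma one_plus_powr_le_taylor:
  fixes q u :: real
  assumes q: "q > 2" and u: "\<bar>u\<bar> \<le> 1/2"
  shows "(1 + u) powr q \<le> 1 + q * u + q * (q - 1) * 2 powr q * u\<^sup>2"
proof (cases "u = 0")
  case True
  then show ?thesis by simp
next
  case False
  define d where "d = (\<lambda>m::nat. if m = 0 then (\<lambda>t::real. t powr q)
    else if m = 1 then (\<lambda>t. q * t powr (q - 1)) else (\<lambda>t. q * (q - 1) * t powr (q - 2)))"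
  have d: "DERIV (d m) t :> d (Suc m) t" if "m < 2" "1/2 \<le> t" for m t
  proof -
    have t: "t > 0" using that by simp
    show ?thesis
    proof (cases "m = 0")
      case True
      then show ?thesis using has_real_derivative_powr[OF t, of q] by (simp add: d_def)
    next
      case False
      then show ?thesis using that DERIV_cmult[OF has_real_derivative_powr[OF t, of "q - 1"], of q]
        by (simp add: d_def algebra_simps)
    qed
  qed
  have "\<exists>t. (if 1 + u < 1 then 1 + u < t \<and> t < 1 else 1 < t \<and> t < 1 + u) \<and>
    d 0 (1 + u) = (\<Sum>m<2. d m 1 / fact m * (1 + u - 1) ^ m) + d 2 t / fact 2 * (1 + u - 1)\<^sup>2"
    by (rule Taylor[of 2 d "d 0" "1/2" "3/2" 1 "1 + u", OF _ refl]) (use d u False in auto)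
  then obtain t where t: "if 1 + u < 1 then 1 + u < t \<and> t < 1 else 1 < t \<and> t < 1 + u"
    and taylor: "d 0 (1 + u) = (\<Sum>m<2. d m 1 / fact m * (1 + u - 1) ^ m) + d 2 t / fact 2 * (1 + u - 1)\<^sup>2"
    by blast
  have "t > 0" "t \<le> 2" using t u by (auto split: if_splits)
  then have "t powr (q - 2) \<le> 2 powr (q - 2)" using q by (intro powr_mono2) auto
  also have "\<dots> \<le> 2 powr q" by (intro powr_mono) auto
  finally have "t powr (q - 2) \<le> 2 powr q" .
  then have "t powr (q - 2) / 2 \<le> 2 powr q"
    using powr_ge_zero[of 2 q] by linarith
  then have "q * (q - 1) * (t powr (q - 2) / 2) \<le> q * (q - 1) * 2 powr q"
    using q by (intro mult_left_mono) auto
  then have "q * (q - 1) * (t powr (q - 2) / 2) * u\<^sup>2 \<le> q * (q - 1) * 2 powr q * u\<^sup>2"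
    by (intro mult_right_mono) simp_all
  moreover have "(1 + u) powr q = 1 + q * u + q * (q - 1) * (t powr (q - 2) / 2) * u\<^sup>2"
    using taylor by (simp add: d_def numeral_2_eq_2)
  ultimately show ?thesis by simp
qed

text \<open>\<open>q * signed_powr q x\<close> is the derivative of \<open>\<bar>x\<bar> powr q\<close>.\<close>
definition signed_powr :: "real \<Rightarrow> real \<Rightarrow> real" where
  "signed_powr q x = sgn x * \<bar>x\<bar> powr (q - 1)"

lemma borel_measurable_signed_powr[measurable]: "signed_powr q \<in> borel_measurable borel"
  unfolding signed_powr_def by measurable

lemma abs_signed_powr: "\<bar>signed_powr q x\<bar> = \<bar>x\<bar> powr (q - 1)"
  by (cases "x = 0") (auto simp: signed_powr_def abs_mult abs_sgn_eq)

definition expansion_const :: "real \<Rightarrow> real" where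
  "expansion_const q = q * (q - 1) * 2 powr q + 3 powr q + q * 2 powr q"

lemma expansion_const_pos: "q > 2 \<Longrightarrow> expansion_const q > 0"
  unfolding expansion_const_def by (intro add_pos_pos) auto

lemma abs_add_powr_large_increment_le:
  fixes q x y :: real
  assumes q: "q > 2" and xy: "\<bar>x\<bar> \<le> 2 * \<bar>y\<bar>"
  shows "\<bar>x + y\<bar> powr q + \<bar>q * signed_powr q x * y\<bar> \<le> (3 powr q + q * 2 powr q) * \<bar>y\<bar> powr q"
proof (cases "y = 0")
  case False
  have "\<bar>x + y\<bar> powr q \<le> (3 * \<bar>y\<bar>) powr q"
    using xy q by (intro powr_mono2) auto
  then have "\<bar>x + y\<bar> powr q \<le> 3 powr q * \<bar>y\<bar> powr q"
    by (simp add: powr_mult)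
  moreover have "\<bar>q * signed_powr q x * y\<bar> = q * \<bar>x\<bar> powr (q - 1) * \<bar>y\<bar>"
    using q by (simp add: abs_mult abs_signed_powr)
  moreover have "\<dots> \<le> q * (2 * \<bar>y\<bar>) powr (q - 1) * \<bar>y\<bar>"
    using xy q by (intro mult_right_mono mult_left_mono powr_mono2) auto
  moreover have "\<dots> = q * 2 powr (q - 1) * \<bar>y\<bar> powr q"
    using False by (simp add: powr_mult powr_diff)
  moreover have "\<dots> \<le> q * 2 powr q * \<bar>y\<bar> powr q"
    using q by (intro mult_right_mono mult_left_mono powr_mono) auto
  ultimately show ?thesis by (simp add: distrib_right)
qed (use xy in simp)

text \<open>For \<open>\<bar>y\<bar> < \<bar>x\<bar> / 2\<close> this is Taylor's formula around \<open>x\<close>.\<close>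
lemma abs_add_powr_le_expansion:
  fixes q x y :: real
  assumes q: "q > 2"
  shows "\<bar>x + y\<bar> powr q \<le> \<bar>x\<bar> powr q + q * signed_powr q x * y
           + expansion_const q * (\<bar>x\<bar> powr (q - 2) * y\<^sup>2 + \<bar>y\<bar> powr q)"
proof (cases "\<bar>x\<bar> \<le> 2 * \<bar>y\<bar>")
  case True
  have "(3 powr q + q * 2 powr q) * \<bar>y\<bar> powr q \<le> expansion_const q * \<bar>y\<bar> powr q"
    using q by (intro mult_right_mono) (simp_all add: expansion_const_def)
  also have "\<dots> \<le> expansion_const q * (\<bar>x\<bar> powr (q - 2) * y\<^sup>2 + \<bar>y\<bar> powr q)"
    using expansion_const_pos[OF q] by (intro mult_left_mono) auto
  finally show ?thesis
    using abs_add_powr_large_increment_le[OF q True] powr_ge_zero[of "\<bar>x\<bar>" q]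
      abs_ge_minus_self[of "q * signed_powr q x * y"] by linarith
next
  case False
  then have x: "\<bar>x\<bar> > 0" by auto
  define u where "u = y / x"
  have u: "\<bar>u\<bar> \<le> 1/2" using False x by (auto simp: u_def abs_divide field_simps)
  have "x + y = x * (1 + u)" using x by (simp add: u_def field_simps)
  then have "\<bar>x + y\<bar> = \<bar>x\<bar> * (1 + u)" using u by (simp add: abs_mult)
  then have "\<bar>x + y\<bar> powr q = \<bar>x\<bar> powr q * (1 + u) powr q" by (simp add: powr_mult)
  also have "\<dots> \<le> \<bar>x\<bar> powr q * (1 + q * u + q * (q - 1) * 2 powr q * u\<^sup>2)"
    by (intro mult_left_mono one_plus_powr_le_taylor q u) simp
  also have "\<dots> = \<bar>x\<bar> powr q + q * (\<bar>x\<bar> powr q * u) + q * (q - 1) * 2 powr q * (\<bar>x\<bar> powr q * u\<^sup>2)"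
    by (simp add: algebra_simps)
  also have "\<bar>x\<bar> powr q * u = signed_powr q x * y"
    using x by (cases "x > 0") (auto simp: signed_powr_def u_def powr_diff field_simps)
  also have "\<bar>x\<bar> powr q * u\<^sup>2 = \<bar>x\<bar> powr (q - 2) * y\<^sup>2"
    using x by (simp add: u_def powr_diff field_simps power2_eq_square)
  also have "q * (q - 1) * 2 powr q * (\<bar>x\<bar> powr (q - 2) * y\<^sup>2)
      \<le> expansion_const q * (\<bar>x\<bar> powr (q - 2) * y\<^sup>2 + \<bar>y\<bar> powr q)"
    using q unfolding expansion_const_def
    by (intro mult_mono) (auto simp: add_increasing2)
  finally show ?thesis by (simp add: mult.assoc)
qed

lemma abs_powr_mult_square_le:
  fixes q x y e :: real
  assumes q: "q > 2" and e: "e > 0"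
  shows "\<bar>x\<bar> powr (q - 2) * y\<^sup>2 \<le> e * \<bar>x\<bar> powr q + e powr (- (q - 2) / 2) * \<bar>y\<bar> powr q"
proof (cases "x = 0 \<or> y = 0")
  case True
  then show ?thesis using q e by auto
next
  case False
  then have x: "\<bar>x\<bar> > 0" and y: "\<bar>y\<bar> > 0" by auto
  define a where "a = e * \<bar>x\<bar> powr q"
  define b where "b = e powr (- (q - 2) / 2) * \<bar>y\<bar> powr q"
  have ab: "a > 0" "b > 0" using x y e by (auto simp: a_def b_def)
  have "a powr ((q - 2) / q) = e powr ((q - 2) / q) * \<bar>x\<bar> powr (q - 2)"
    unfolding a_def using q by (simp add: powr_mult powr_powr)
  moreover have "b powr (2 / q) = e powr (- (q - 2) / q) * y\<^sup>2"
  proof -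
    have "- (q - 2) / 2 * (2 / q) = - (q - 2) / q" using q by (simp add: field_simps)
    then show ?thesis unfolding b_def using q y by (simp add: powr_mult powr_powr powr_numeral)
  qed
  moreover have "e powr ((q - 2) / q) * e powr (- (q - 2) / q) = 1"
  proof -
    have "(q - 2) / q + (2 - q) / q = 0" by (simp add: add_divide_distrib[symmetric])
    then show ?thesis using e by (simp add: powr_add[symmetric])
  qed
  ultimately have "\<bar>x\<bar> powr (q - 2) * y\<^sup>2 = a powr ((q - 2) / q) * b powr (2 / q)"
    by (simp add: algebra_simps)
  also have "\<dots> \<le> (q - 2) / q * a + 2 / q * b"
    using q ab by (intro Youngs_inequality_0) (auto simp: field_simps)
  also have "\<dots> \<le> a + b"
    using q ab by (intro add_mono) (auto simp: field_simps)
  finally show ?thesis by (simp add: a_def b_def)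
qed

lemma powr_add_one_ge:
  fixes n r :: real
  assumes n: "n > 0" and r: "r \<ge> 1"
  shows "n powr r + r * n powr (r - 1) \<le> (n + 1) powr r"
proof -
  have "\<forall>x. n \<le> x \<and> x \<le> n + 1 \<longrightarrow> DERIV (\<lambda>x. x powr r) x :> r * x powr (r - 1)"
    using n by (auto intro!: has_real_derivative_powr)
  then obtain z where z: "n < z" "z < n + 1" "(n + 1) powr r - n powr r = r * z powr (r - 1)"
    using MVT2[of n "n + 1" "\<lambda>x. x powr r" "\<lambda>x. r * x powr (r - 1)"] by auto
  have "n powr (r - 1) \<le> z powr (r - 1)" using z n r by (intro powr_mono2) auto
  then have "r * n powr (r - 1) \<le> r * z powr (r - 1)" using r by simp
  then show ?thesis using z by simp
qed

lemma powr_minus_one_mult_le: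
  fixes a b q :: real
  assumes "a \<ge> 0" "b \<ge> 0" "q \<ge> 1"
  shows "a powr (q - 1) * b \<le> a powr q + b powr q"
proof (cases "a \<le> b")
  case True
  then have "a powr (q - 1) * b \<le> b powr (q - 1) * b"
    using assms by (intro mult_right_mono powr_mono2) auto
  also have "\<dots> = b powr q" using assms by (cases "b = 0") (auto simp: powr_diff)
  finally show ?thesis using powr_ge_zero[of a q] by linarith
next
  case False
  then have "a powr (q - 1) * b \<le> a powr (q - 1) * a"
    using assms by (intro mult_left_mono) auto
  also have "\<dots> = a powr q" using False assms by (simp add: powr_diff)
  finally show ?thesis using powr_ge_zero[of b q] by linarith
qed

lemma abs_add_powr_le:
  fixes a b q :: real
  assumes "q \<ge> 0"
  shows "\<bar>a + b\<bar> powr q \<le> 2 powr q * (\<bar>a\<bar> powr q + \<bar>b\<bar> powr q)"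
proof -
  have "\<bar>a + b\<bar> powr q \<le> (2 * max \<bar>a\<bar> \<bar>b\<bar>) powr q"
    using assms by (intro powr_mono2) auto
  also have "\<dots> = 2 powr q * max \<bar>a\<bar> \<bar>b\<bar> powr q" by (simp add: powr_mult)
  also have "max \<bar>a\<bar> \<bar>b\<bar> powr q \<le> \<bar>a\<bar> powr q + \<bar>b\<bar> powr q"
    by (cases "\<bar>a\<bar> \<le> \<bar>b\<bar>") (auto simp: max_def)
  finally show ?thesis by simp
qed

lemma convex_on_abs_powr:
  assumes "q \<ge> 1"
  shows "convex_on UNIV (\<lambda>x::real. \<bar>x\<bar> powr q)"
proof (rule convex_onI)
  fix t x y :: real
  assume t: "0 < t" "t < 1"
  have convex_nonneg: "(s * a + (1 - s) * b) powr q \<le> s * a powr q + (1 - s) * b powr q"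
    if "a \<ge> 0" "b \<ge> 0" "0 < s" "s < 1" for a b s :: real
  proof (cases "a = 0 \<or> b = 0")
    case False
    then show ?thesis
      using that convex_onD[OF powr_convex[OF assms], of "1 - s" a b] by simp
  next
    case True
    have "c powr q \<le> c" if "0 \<le> c" "c \<le> 1" for c :: real
      using that assms by (cases "c = 0") (auto intro: powr_le_one_le)
    then show ?thesis
      using True that by (auto simp: powr_mult intro!: mult_right_mono)
  qed
  have "\<bar>(1 - t) *\<^sub>R x + t *\<^sub>R y\<bar> \<le> (1 - t) * \<bar>x\<bar> + t * \<bar>y\<bar>"
    using t by (auto intro!: order.trans[OF abs_triangle_ineq] simp: abs_mult)
  then have "\<bar>(1 - t) *\<^sub>R x + t *\<^sub>R y\<bar> powr q \<le> ((1 - t) * \<bar>x\<bar> + (1 - (1 - t)) * \<bar>y\<bar>) powr q"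
    using assms by (intro powr_mono2) auto
  also have "\<dots> \<le> (1 - t) * \<bar>x\<bar> powr q + (1 - (1 - t)) * \<bar>y\<bar> powr q"
    using t by (intro convex_nonneg) auto
  finally show "\<bar>(1 - t) *\<^sub>R x + t *\<^sub>R y\<bar> powr q \<le> (1 - t) * \<bar>x\<bar> powr q + t * \<bar>y\<bar> powr q"
    by simp
qed simp

section \<open>Moments of sums with orthogonal increments\<close>

lemma integrable_abs_powr_add:
  fixes f g :: "'a \<Rightarrow> real"
  assumes q: "q \<ge> 0" and [measurable]: "f \<in> borel_measurable M" "g \<in> borel_measurable M"
    and "integrable M (\<lambda>x. \<bar>f x\<bar> powr q)" "integrable M (\<lambda>x. \<bar>g x\<bar> powr q)"
  shows "integrable M (\<lambda>x. \<bar>f x + g x\<bar> powr q)"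
proof (rule Bochner_Integration.integrable_bound)
  show "integrable M (\<lambda>x. 2 powr q * (\<bar>f x\<bar> powr q + \<bar>g x\<bar> powr q))"
    using assms by auto
  show "AE x in M. norm (\<bar>f x + g x\<bar> powr q) \<le> norm (2 powr q * (\<bar>f x\<bar> powr q + \<bar>g x\<bar> powr q))"
    using abs_add_powr_le[OF q] by (auto intro!: AE_I2)
qed measurable

lemma integrable_abs_powr_sum:
  fixes Z :: "nat \<Rightarrow> 'a \<Rightarrow> real"
  assumes q: "q \<ge> 0" and "\<And>k. k < n \<Longrightarrow> Z k \<in> borel_measurable M"
    and "\<And>k. k < n \<Longrightarrow> integrable M (\<lambda>x. \<bar>Z k x\<bar> powr q)"
  shows "integrable M (\<lambda>x. \<bar>\<Sum>k<n. Z k x\<bar> powr q)"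
  using assms(2,3)
proof (induction n)
  case (Suc n)
  then show ?case
    using integrable_abs_powr_add[OF q, of "\<lambda>x. \<Sum>k<n. Z k x" M "Z n"] by auto
qed (use q in simp)

lemma integrable_signed_powr_mult:
  fixes f g :: "'a \<Rightarrow> real"
  assumes q: "q \<ge> 1" and [measurable]: "f \<in> borel_measurable M" "g \<in> borel_measurable M"
    and "integrable M (\<lambda>x. \<bar>f x\<bar> powr q)" "integrable M (\<lambda>x. \<bar>g x\<bar> powr q)"
  shows "integrable M (\<lambda>x. signed_powr q (f x) * g x)"
proof (rule Bochner_Integration.integrable_bound)
  show "integrable M (\<lambda>x. \<bar>f x\<bar> powr q + \<bar>g x\<bar> powr q)"
    using assms by auto
  show "AE x in M. norm (signed_powr q (f x) * g x) \<le> norm (\<bar>f x\<bar> powr q + \<bar>g x\<bar> powr q)"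
    using powr_minus_one_mult_le[OF _ _ q] by (auto intro!: AE_I2 simp: abs_mult abs_signed_powr)
qed measurable

lemma (in prob_space) integrable_of_integrable_abs_powr:
  fixes f :: "'a \<Rightarrow> real"
  assumes q: "q \<ge> 1" and [measurable]: "f \<in> borel_measurable M"
    and "integrable M (\<lambda>x. \<bar>f x\<bar> powr q)"
  shows "integrable M f"
proof (rule Bochner_Integration.integrable_bound)
  show "integrable M (\<lambda>x. 1 + \<bar>f x\<bar> powr q)" using assms by auto
  have "\<bar>y\<bar> \<le> 1 + \<bar>y\<bar> powr q" for y :: real
  proof (cases "\<bar>y\<bar> \<le> 1")
    case False
    then have "\<bar>y\<bar> powr 1 \<le> \<bar>y\<bar> powr q" using q by (intro powr_mono) auto
    then show ?thesis using False by simp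
  qed (simp add: add_increasing2)
  then show "AE x in M. norm (f x) \<le> norm (1 + \<bar>f x\<bar> powr q)" by (auto intro!: AE_I2)
qed simp

text \<open>The linear term of the expansion of \<open>\<bar>S + Z\<bar> powr q\<close> around \<open>S\<close> vanishes by
  orthogonality; the quadratic term is split by Young's inequality.\<close>
lemma integral_abs_powr_add_le:
  fixes S Z :: "'a \<Rightarrow> real"
  assumes q: "q > 2" and e: "e > 0"
    and [measurable]: "S \<in> borel_measurable M" "Z \<in> borel_measurable M"
    and S: "integrable M (\<lambda>x. \<bar>S x\<bar> powr q)" and Z: "integrable M (\<lambda>x. \<bar>Z x\<bar> powr q)"
    and orth: "(\<integral>x. signed_powr q (S x) * Z x \<partial>M) = 0"
  shows "(\<integral>x. \<bar>S x + Z x\<bar> powr q \<partial>M) \<le> (1 + expansion_const q * e) * (\<integral>x. \<bar>S x\<bar> powr q \<partial>M)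
           + expansion_const q * (e powr (- (q - 2) / 2) + 1) * (\<integral>x. \<bar>Z x\<bar> powr q \<partial>M)"
proof -
  let ?C = "expansion_const q"
  have C: "?C > 0" by (rule expansion_const_pos[OF q])
  have pointwise: "\<bar>S x + Z x\<bar> powr q \<le> \<bar>S x\<bar> powr q + q * (signed_powr q (S x) * Z x)
      + ?C * e * \<bar>S x\<bar> powr q + ?C * (e powr (- (q - 2) / 2) + 1) * \<bar>Z x\<bar> powr q" for x
  proof -
    have "?C * (\<bar>S x\<bar> powr (q - 2) * (Z x)\<^sup>2 + \<bar>Z x\<bar> powr q)
        \<le> ?C * (e * \<bar>S x\<bar> powr q + e powr (- (q - 2) / 2) * \<bar>Z x\<bar> powr q + \<bar>Z x\<bar> powr q)"
      using abs_powr_mult_square_le[OF q e] C by (intro mult_left_mono) auto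
    then show ?thesis
      using abs_add_powr_le_expansion[OF q, of "S x" "Z x"] by (simp add: algebra_simps)
  qed
  have SZ: "integrable M (\<lambda>x. signed_powr q (S x) * Z x)"
    using q S Z by (intro integrable_signed_powr_mult) auto
  have "(\<integral>x. \<bar>S x + Z x\<bar> powr q \<partial>M) \<le> (\<integral>x. \<bar>S x\<bar> powr q + q * (signed_powr q (S x) * Z x)
      + ?C * e * \<bar>S x\<bar> powr q + ?C * (e powr (- (q - 2) / 2) + 1) * \<bar>Z x\<bar> powr q \<partial>M)"
    using pointwise S Z SZ integrable_abs_powr_add[of q S M Z] q by (intro integral_mono) auto
  also have "\<dots> = (1 + ?C * e) * (\<integral>x. \<bar>S x\<bar> powr q \<partial>M) + q * (\<integral>x. signed_powr q (S x) * Z x \<partial>M)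
      + ?C * (e powr (- (q - 2) / 2) + 1) * (\<integral>x. \<bar>Z x\<bar> powr q \<partial>M)"
    using S Z SZ by (simp add: algebra_simps)
  finally show ?thesis by (simp add: orth)
qed

lemma powr_growth_bound:
  fixes a :: "nat \<Rightarrow> real" and q K C m :: real
  assumes q: "q > 2" and K: "C \<le> q * K / 4" "K * m \<ge> 0" and a1: "a 1 \<le> K * m"
    and step: "\<And>n. 1 \<le> n \<Longrightarrow> n < N \<Longrightarrow>
      a (Suc n) \<le> (1 + q / (4 * real n)) * a n + C * real n powr (q / 2 - 1) * m"
    and m: "m \<ge> 0"
  shows "1 \<le> n \<Longrightarrow> n \<le> N \<Longrightarrow> a n \<le> K * m * real n powr (q / 2)"
proof (induction n rule: nat_induct_at_least)
  case base
  then show ?case using a1 by simp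
next
  case (Suc n)
  define P where "P = real n powr (q / 2 - 1)"
  have n: "real n \<ge> 1" using Suc by simp
  have nP: "real n powr (q / 2) = real n * P"
    using n by (simp add: P_def powr_diff)
  have "a (Suc n) \<le> (1 + q / (4 * real n)) * (K * m * real n powr (q / 2)) + q * K / 4 * P * m"
  proof (rule order.trans[OF step add_mono])
    show "(1 + q / (4 * real n)) * a n \<le> (1 + q / (4 * real n)) * (K * m * real n powr (q / 2))"
      using Suc q n by (intro mult_left_mono) auto
    show "C * real n powr (q / 2 - 1) * m \<le> q * K / 4 * P * m"
      using mult_right_mono[OF mult_right_mono[OF K(1)], of P m] m by (simp add: P_def)
  qed (use Suc in auto)
  also have "\<dots> = K * m * (real n powr (q / 2) + q / 2 * P)"
    using n by (simp add: nP field_simps)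
  also have "\<dots> \<le> K * m * real (Suc n) powr (q / 2)"
    using powr_add_one_ge[of "real n" "q / 2"] n q K by (intro mult_left_mono) (auto simp: P_def add.commute)
  finally show ?case .
qed

definition moment_const :: "real \<Rightarrow> real" where
  "moment_const q = max 1 (4 * expansion_const q
     * (1 + (q / (4 * expansion_const q)) powr (- (q - 2) / 2)) / q)"

lemma moment_const_bounds:
  assumes "q > 2"
  shows "expansion_const q * (1 + (q / (4 * expansion_const q)) powr (- (q - 2) / 2)) \<le> q * moment_const q / 4"
    and "moment_const q \<ge> 1"
proof -
  have "4 * (expansion_const q * (1 + (q / (4 * expansion_const q)) powr (- (q - 2) / 2))) / q
      \<le> moment_const q"
    unfolding moment_const_def by (simp add: mult.assoc)
  then show "expansion_const q * (1 + (q / (4 * expansion_const q)) powr (- (q - 2) / 2)) \<le> q * moment_const q / 4"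
    using assms by (simp add: field_simps)
qed (simp add: moment_const_def)

lemma integral_abs_powr_sum_le:
  fixes Z :: "nat \<Rightarrow> 'a \<Rightarrow> real"
  assumes q: "q > 2"
    and [measurable]: "\<And>k. k < N \<Longrightarrow> Z k \<in> borel_measurable M"
    and Z: "\<And>k. k < N \<Longrightarrow> integrable M (\<lambda>x. \<bar>Z k x\<bar> powr q)"
    and m: "\<And>k. k < N \<Longrightarrow> (\<integral>x. \<bar>Z k x\<bar> powr q \<partial>M) \<le> m"
    and orth: "\<And>n. n < N \<Longrightarrow> (\<integral>x. signed_powr q (\<Sum>k<n. Z k x) * Z n x \<partial>M) = 0"
  shows "(\<integral>x. \<bar>\<Sum>k<N. Z k x\<bar> powr q \<partial>M) \<le> moment_const q * m * real N powr (q / 2)"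
proof (cases "N = 0")
  case False
  let ?C = "expansion_const q" and ?K = "moment_const q"
  define c where "c = q / (4 * ?C)"
  have C: "?C > 0" by (rule expansion_const_pos[OF q])
  then have c: "c > 0" "?C * c = q / 4" using q by (auto simp: c_def)
  note K = moment_const_bounds[OF q, folded c_def]
  have "0 \<le> (\<integral>x. \<bar>Z 0 x\<bar> powr q \<partial>M)" by simp
  then have m0: "m \<ge> 0" using m[of 0] False by linarith
  show ?thesis
  proof (rule powr_growth_bound[OF q K(1) _ _ _ m0, where a="\<lambda>n. \<integral>x. \<bar>\<Sum>k<n. Z k x\<bar> powr q \<partial>M"])
    show "0 \<le> ?K * m" using K m0 by simp
    show "(\<integral>x. \<bar>\<Sum>k<1. Z k x\<bar> powr q \<partial>M) \<le> ?K * m"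
      using m[of 0] False K(2) m0 by (simp add: order.trans[OF _ mult_right_mono[of 1]])
    fix n :: nat
    assume n: "1 \<le> n" "n < N"
    define e where "e = c / n"
    have "?C * e = (?C * c) / n" by (simp add: e_def)
    also have "\<dots> = q / (4 * real n)" by (simp only: c(2))
    finally have Ce: "?C * e = q / (4 * real n)" .
    have e: "e > 0" using c n by (simp add: e_def)
    have "real n powr (- (q - 2) / 2) = real n powr (- (q / 2 - 1))"
      by (rule arg_cong[where f = "(powr) (real n)"]) simp
    also have "\<dots> = inverse (real n powr (q / 2 - 1))" by (rule powr_minus)
    finally have "e powr (- (q - 2) / 2) = c powr (- (q - 2) / 2) / inverse (real n powr (q / 2 - 1))"
      by (simp only: e_def powr_divide)
    then have "e powr (- (q - 2) / 2) = c powr (- (q - 2) / 2) * real n powr (q / 2 - 1)"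
      by (metis divide_inverse inverse_inverse_eq)
    then have coeff: "?C * (e powr (- (q - 2) / 2) + 1) \<le> ?C * (1 + c powr (- (q - 2) / 2)) * real n powr (q / 2 - 1)"
      using C n q by (auto simp: algebra_simps ge_one_powr_ge_zero)
    have Zn: "(\<integral>x. \<bar>Z n x\<bar> powr q \<partial>M) \<le> m" using m n by simp
    have rest: "?C * (e powr (- (q - 2) / 2) + 1) * (\<integral>x. \<bar>Z n x\<bar> powr q \<partial>M)
        \<le> ?C * (1 + c powr (- (q - 2) / 2)) * real n powr (q / 2 - 1) * m"
      using C by (intro mult_mono[OF coeff Zn]) auto
    have "(\<integral>x. \<bar>\<Sum>k<Suc n. Z k x\<bar> powr q \<partial>M) \<le> (1 + ?C * e) * (\<integral>x. \<bar>\<Sum>k<n. Z k x\<bar> powr q \<partial>M)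
        + ?C * (e powr (- (q - 2) / 2) + 1) * (\<integral>x. \<bar>Z n x\<bar> powr q \<partial>M)"
      using integral_abs_powr_add_le[OF q e(1), of "\<lambda>x. \<Sum>k<n. Z k x" M "Z n"] n q
        integrable_abs_powr_sum[of q n Z M] Z orth by auto
    then show "(\<integral>x. \<bar>\<Sum>k<Suc n. Z k x\<bar> powr q \<partial>M) \<le> (1 + q / (4 * real n)) * (\<integral>x. \<bar>\<Sum>k<n. Z k x\<bar> powr q \<partial>M)
        + ?C * (1 + c powr (- (q - 2) / 2)) * real n powr (q / 2 - 1) * m"
      using rest unfolding Ce[symmetric] by linarith
  qed (use False in auto)
qed simp

section \<open>Conditional expectations\<close>

lemma set_integral_eq_on_sigma_sets:
  fixes f g :: "'a \<Rightarrow> real"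
  assumes E: "Int_stable E" "E \<subseteq> sets M" "space M \<in> E"
    and f: "integrable M f" and g: "integrable M g"
    and eq: "\<And>A. A \<in> E \<Longrightarrow> (\<integral>x\<in>A. f x \<partial>M) = (\<integral>x\<in>A. g x \<partial>M)"
    and A: "A \<in> sigma_sets (space M) E"
  shows "(\<integral>x\<in>A. f x \<partial>M) = (\<integral>x\<in>A. g x \<partial>M)"
proof -
  have E_space: "E \<subseteq> Pow (space M)" using E(2) sets.sets_into_space by auto
  have sigma_E: "sigma_sets (space M) E \<subseteq> sets M" using E(2) by (rule sets.sigma_sets_subset)
  have set_int: "set_integrable M A h" if "A \<in> sets M" "integrable M h" for A and h :: "'a \<Rightarrow> real"
    using integrable_mult_indicator[OF that] unfolding set_integrable_def .
  have compl_eq: "(\<integral>x\<in>space M - A. h x \<partial>M) = (\<integral>x. h x \<partial>M) - (\<integral>x\<in>A. h x \<partial>M)"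
    if "A \<in> sets M" "integrable M h" for A and h :: "'a \<Rightarrow> real"
  proof -
    have "(\<integral>x\<in>space M - A. h x \<partial>M) = (\<integral>x. h x - indicator A x * h x \<partial>M)"
      unfolding set_lebesgue_integral_def
      by (intro Bochner_Integration.integral_cong) (auto simp: indicator_def)
    then show ?thesis
      using that set_int[OF that] by (simp add: set_integrable_def set_lebesgue_integral_def)
  qed
  have whole: "(\<integral>x. f x \<partial>M) = (\<integral>x. g x \<partial>M)"
    using eq[OF E(3)] f g by (simp add: set_integral_space)
  from E(1) E_space A show ?thesis
  proof (induction rule: sigma_sets_induct_disjoint)
    case (compl A)
    then show ?case using sigma_E compl_eq f g whole by auto
  next
    case (union A)
    then have "range A \<subseteq> sets M" "(\<Union>i. A i) \<in> sets M" using sigma_E by auto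
    moreover have "A i \<inter> A j = {}" if "i \<noteq> j" for i j
      using union(1) that by (simp add: disjoint_family_on_def)
    ultimately show ?case
      using union(3) set_int f g by (simp add: lebesgue_integral_countable_add)
  qed (use eq in \<open>simp_all add: set_lebesgue_integral_def\<close>)
qed

lemma integral_weighted_eq_of_weighted_laws_eq:
  fixes h1 h2 T1 T2 :: "'a \<Rightarrow> real"
  assumes [measurable]: "h1 \<in> borel_measurable M" "h2 \<in> borel_measurable M"
      "T1 \<in> borel_measurable M" "T2 \<in> borel_measurable M"
    and h1: "AE x in M. 0 \<le> h1 x" "integrable M h1" and h2: "AE x in M. 0 \<le> h2 x" "integrable M h2"
    and eq: "\<And>C. C \<in> sets borel \<Longrightarrow>
      (\<integral>x. h1 x * indicator C (T1 x) \<partial>M) = (\<integral>x. h2 x * indicator C (T2 x) \<partial>M)"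
  shows "(\<integral>x. h1 x * T1 x \<partial>M) = (\<integral>x. h2 x * T2 x \<partial>M)"
proof -
  have emeasure_eq: "emeasure (distr (density M h) borel T) C = ennreal (\<integral>x. h x * indicator C (T x) \<partial>M)"
    if [measurable]: "h \<in> borel_measurable M" "T \<in> borel_measurable M" "C \<in> sets borel"
      and h: "AE x in M. 0 \<le> h x" "integrable M h" for h T :: "'a \<Rightarrow> real" and C
  proof -
    have "emeasure (distr (density M h) borel T) C = (\<integral>\<^sup>+x. ennreal (h x) * indicator (T -` C \<inter> space M) x \<partial>M)"
      by (simp add: emeasure_distr emeasure_density)
    also have "\<dots> = (\<integral>\<^sup>+x. ennreal (h x * indicator C (T x)) \<partial>M)"
      by (intro nn_integral_cong) (simp add: indicator_def)
    also have "\<dots> = ennreal (\<integral>x. h x * indicator C (T x) \<partial>M)"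
    proof (rule nn_integral_eq_integral)
      show "integrable M (\<lambda>x. h x * indicator C (T x))"
        using h(2) by (rule Bochner_Integration.integrable_bound) (auto split: split_indicator)
    qed (use h(1) in auto)
    finally show ?thesis .
  qed
  have integral_eq: "(\<integral>x. h x * T x \<partial>M) = (\<integral>y. y \<partial>distr (density M h) borel T)"
    if [measurable]: "h \<in> borel_measurable M" "T \<in> borel_measurable M"
      and h: "AE x in M. 0 \<le> h x" for h T :: "'a \<Rightarrow> real"
    using h by (simp add: integral_distr integral_density)
  have "distr (density M h1) borel T1 = distr (density M h2) borel T2"
    by (rule measure_eqI) (simp_all add: emeasure_eq h1 h2 eq)
  then show ?thesis using h1 h2 by (simp add: integral_eq)
qed

lemma (in prob_space) sigma_finite_subalgebra_if_subalgebra: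
  "subalgebra M F \<Longrightarrow> sigma_finite_subalgebra M F"
  by (rule finite_measure_subalgebra_is_sigma_finite)
     (simp add: finite_measure_subalgebra_def finite_measure_subalgebra_axioms_def finite_measure_axioms)

lemma sets_sigma_rv:
  assumes "Y \<in> borel_measurable M"
  shows "sets (sigma_rv M Y) = {Y -` A \<inter> space M | A. A \<in> sets borel}"
  unfolding sigma_rv_def by (rule sets_vimage_algebra2) (use measurable_space[OF assms] in auto)

lemma subalgebra_sigma_rv:
  assumes "Y \<in> borel_measurable M"
  shows "subalgebra M (sigma_rv M Y)"
  using sets_sigma_rv[OF assms] measurable_sets[OF assms] unfolding subalgebra_def
  by (auto simp: sigma_rv_def)

lemma measurable_sigma_rv:
  assumes "Y \<in> borel_measurable M"
  shows "Y \<in> measurable (sigma_rv M Y) borel"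
  unfolding sigma_rv_def
  by (rule measurable_vimage_algebra1) (use measurable_space[OF assms] in auto)

lemma (in sigma_finite_subalgebra) integrable_abs_powr_real_cond_exp:
  fixes X :: "'a \<Rightarrow> real"
  assumes "prob_space M" and q: "q \<ge> 1" and [measurable]: "X \<in> borel_measurable M"
    and Xq: "integrable M (\<lambda>\<omega>. \<bar>X \<omega>\<bar> powr q)"
  shows "integrable M (\<lambda>\<omega>. \<bar>real_cond_exp M F X \<omega>\<bar> powr q)"
proof (rule integrable_convex_cond_exp[where I = UNIV])
  show "integrable M X"
    using prob_space.integrable_of_integrable_abs_powr[OF assms] .
  show "convex_on UNIV (\<lambda>x. \<bar>x\<bar> powr q)" by (rule convex_on_abs_powr[OF q])
qed (use Xq in auto)

section \<open>Conditionally independent copies\<close>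

locale cond_iid_family = prob_space M
  for M :: "'a measure" +
  fixes Y :: "'a \<Rightarrow> 'b::topological_space" and X :: "'a \<Rightarrow> real"
    and I :: "'i set" and Xs :: "'i \<Rightarrow> 'a \<Rightarrow> real"
  assumes measurable_Y[measurable]: "Y \<in> borel_measurable M"
    and measurable_X[measurable]: "X \<in> borel_measurable M"
    and integrable_X: "integrable M X"
    and finite_I: "finite I"
    and cond_iid: "cond_iid_copies M Y X I Xs"
begin

abbreviation "F \<equiv> sigma_rv M Y"

abbreviation "U \<equiv> real_cond_exp M F X"

interpretation F: sigma_finite_subalgebra M F
  by (intro sigma_finite_subalgebra_if_subalgebra subalgebra_sigma_rv measurable_Y)

lemma measurable_Xs[measurable]: "j \<in> I \<Longrightarrow> Xs j \<in> borel_measurable M"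
  using cond_iid unfolding cond_iid_copies_def by auto

lemma measurable_Y_F[measurable]: "Y \<in> measurable F borel"
  by (rule measurable_sigma_rv[OF measurable_Y])

lemma integrable_U: "integrable M U"
  by (rule F.real_cond_exp_int(1)[OF integrable_X])

definition cond_prob :: "real set \<Rightarrow> 'a \<Rightarrow> real" where
  "cond_prob B = real_cond_exp M F (\<lambda>\<omega>. indicator B (X \<omega>))"

lemma measurable_cond_prob_F[measurable]: "cond_prob B \<in> borel_measurable F"
  unfolding cond_prob_def by simp

lemma measurable_cond_prob[measurable]: "cond_prob B \<in> borel_measurable M"
  unfolding cond_prob_def by simp

lemma integrable_indicator_X:
  "B \<in> sets borel \<Longrightarrow> integrable M (\<lambda>\<omega>. indicator B (X \<omega>) :: real)"
  by (intro integrable_const_bound[where B=1]) auto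

lemma AE_cond_prob_bounds:
  assumes "B \<in> sets borel"
  shows "AE \<omega> in M. 0 \<le> cond_prob B \<omega> \<and> cond_prob B \<omega> \<le> 1"
  using F.real_cond_exp_ge_c[OF integrable_indicator_X[OF assms], of 0]
    F.real_cond_exp_le_c[OF integrable_indicator_X[OF assms], of 1]
  unfolding cond_prob_def by auto

lemma AE_cond_prob_UNIV: "AE \<omega> in M. cond_prob UNIV \<omega> = 1"
  using F.real_cond_exp_F_meas[of "\<lambda>_. 1"] unfolding cond_prob_def by simp

lemma AE_prod_cond_prob_bounds:
  assumes "finite K" "\<And>k. k \<in> K \<Longrightarrow> B k \<in> sets borel"
  shows "AE \<omega> in M. 0 \<le> (\<Prod>k\<in>K. cond_prob (B k) \<omega>) \<and> (\<Prod>k\<in>K. cond_prob (B k) \<omega>) \<le> 1"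
proof -
  have "AE \<omega> in M. \<forall>k\<in>K. 0 \<le> cond_prob (B k) \<omega> \<and> cond_prob (B k) \<omega> \<le> 1"
    using assms by (intro AE_finite_allI AE_cond_prob_bounds) auto
  then show ?thesis by eventually_elim (auto intro: prod_nonneg prod_le_1)
qed

definition cylinder :: "'b set \<Rightarrow> (nat \<Rightarrow> 'i) \<Rightarrow> nat set \<Rightarrow> (nat \<Rightarrow> real set) \<Rightarrow> 'a set" where
  "cylinder A s K B = {\<omega> \<in> space M. Y \<omega> \<in> A \<and> (\<forall>k\<in>K. Xs (s k) \<omega> \<in> B k)}"

lemma cylinder_subset_space: "cylinder A s K B \<subseteq> space M"
  by (auto simp: cylinder_def)

lemma sets_cylinder:
  assumes "finite K" "s ` K \<subseteq> I" "A \<in> sets borel" "\<And>k. k \<in> K \<Longrightarrow> B k \<in> sets borel"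
  shows "cylinder A s K B \<in> sets M"
proof -
  have [measurable]: "\<And>k. k \<in> K \<Longrightarrow> Xs (s k) \<in> borel_measurable M"
    "\<And>k. k \<in> K \<Longrightarrow> B k \<in> sets borel" "A \<in> sets borel"
    using assms by auto
  show ?thesis unfolding cylinder_def using assms(1) by measurable
qed

lemma measure_cylinder:
  assumes K: "finite K" "inj_on s K" "s ` K \<subseteq> I"
    and A: "A \<in> sets borel" and B: "\<And>k. k \<in> K \<Longrightarrow> B k \<in> sets borel"
  shows "measure M (cylinder A s K B) = (\<integral>\<omega>. indicator A (Y \<omega>) * (\<Prod>k\<in>K. cond_prob (B k) \<omega>) \<partial>M)"
proof -
  define B' where "B' j = (if j \<in> s ` K then B (the_inv_into K s j) else UNIV)" for j
  have B'_s: "B' (s k) = B k" if "k \<in> K" for k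
    using K that by (simp add: B'_def the_inv_into_f_f)
  have "\<forall>j\<in>I. B' j \<in> sets borel" using B K by (auto simp: B'_def the_inv_into_f_f)
  then have "measure M {\<omega> \<in> space M. Y \<omega> \<in> A \<and> (\<forall>j\<in>I. Xs j \<omega> \<in> B' j)}
      = (\<integral>\<omega>. indicator A (Y \<omega>) * (\<Prod>j\<in>I. cond_prob (B' j) \<omega>) \<partial>M)"
    using cond_iid A unfolding cond_iid_copies_def cond_prob_def by blast
  moreover have "(\<forall>j\<in>I. Xs j \<omega> \<in> B' j) \<longleftrightarrow> (\<forall>k\<in>K. Xs (s k) \<omega> \<in> B k)" for \<omega>
    using K B'_s by (auto simp: B'_def the_inv_into_f_f image_subset_iff)
  then have "{\<omega> \<in> space M. Y \<omega> \<in> A \<and> (\<forall>j\<in>I. Xs j \<omega> \<in> B' j)} = cylinder A s K B"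
    by (simp add: cylinder_def)
  moreover have "AE \<omega> in M. (\<Prod>j\<in>I. cond_prob (B' j) \<omega>) = (\<Prod>k\<in>K. cond_prob (B k) \<omega>)"
    using AE_cond_prob_UNIV
  proof eventually_elim
    case (elim \<omega>)
    have "(\<Prod>j\<in>I. cond_prob (B' j) \<omega>) = (\<Prod>j\<in>s ` K. cond_prob (B' j) \<omega>) * (\<Prod>j\<in>I - s ` K. cond_prob (B' j) \<omega>)"
      using finite_I K(3) by (metis mult.commute prod.subset_diff)
    also have "(\<Prod>j\<in>I - s ` K. cond_prob (B' j) \<omega>) = 1"
      using elim by (intro prod.neutral) (auto simp: B'_def)
    also have "(\<Prod>j\<in>s ` K. cond_prob (B' j) \<omega>) = (\<Prod>k\<in>K. cond_prob (B k) \<omega>)"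
      using K by (simp add: prod.reindex B'_s)
    finally show ?case by simp
  qed
  then have "(\<integral>\<omega>. indicator A (Y \<omega>) * (\<Prod>j\<in>I. cond_prob (B' j) \<omega>) \<partial>M)
      = (\<integral>\<omega>. indicator A (Y \<omega>) * (\<Prod>k\<in>K. cond_prob (B k) \<omega>) \<partial>M)"
    by (intro integral_cong_AE) (use A in auto)
  ultimately show ?thesis by simp
qed

lemma AE_cond_exp_cylinder:
  assumes K: "finite K" "inj_on s K" "s ` K \<subseteq> I" and B: "\<And>k. k \<in> K \<Longrightarrow> B k \<in> sets borel"
  shows "AE \<omega> in M. real_cond_exp M F (indicator (cylinder UNIV s K B)) \<omega> = (\<Prod>k\<in>K. cond_prob (B k) \<omega>)"
proof (rule F.real_cond_exp_charact)
  have cyl: "cylinder A s K B \<in> sets M" if "A \<in> sets borel" for A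
    using sets_cylinder[OF K(1,3) that B] .
  show "integrable M (indicator (cylinder UNIV s K B) :: _ \<Rightarrow> real)"
    using cyl[of UNIV] by (intro integrable_const_bound[where B=1]) auto
  have "AE \<omega> in M. 0 \<le> (\<Prod>k\<in>K. cond_prob (B k) \<omega>) \<and> (\<Prod>k\<in>K. cond_prob (B k) \<omega>) \<le> 1"
    using K(1) B by (rule AE_prod_cond_prob_bounds)
  then show "integrable M (\<lambda>\<omega>. \<Prod>k\<in>K. cond_prob (B k) \<omega>)"
    by (intro integrable_const_bound[where B=1]) (auto elim: eventually_mono)
  show "(\<lambda>\<omega>. \<Prod>k\<in>K. cond_prob (B k) \<omega>) \<in> borel_measurable F" by measurable
  fix E
  assume "E \<in> sets F"
  then obtain A where A: "A \<in> sets borel" "E = Y -` A \<inter> space M"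
    using sets_sigma_rv[OF measurable_Y] by auto
  have "(\<integral>\<omega>\<in>E. indicator (cylinder UNIV s K B) \<omega> \<partial>M) = measure M (cylinder A s K B)"
    using cyl[OF A(1)] unfolding set_lebesgue_integral_def A(2)
    by (simp add: indicator_inter_arith[symmetric] cylinder_def Int_def conj_ac)
  also have "\<dots> = (\<integral>\<omega>. indicator A (Y \<omega>) * (\<Prod>k\<in>K. cond_prob (B k) \<omega>) \<partial>M)"
    by (rule measure_cylinder[OF K A(1) B])
  also have "\<dots> = (\<integral>\<omega>\<in>E. (\<Prod>k\<in>K. cond_prob (B k) \<omega>) \<partial>M)"
    unfolding set_lebesgue_integral_def A(2)
    by (intro Bochner_Integration.integral_cong) (auto simp: indicator_def)
  finally show "(\<integral>\<omega>\<in>E. indicator (cylinder UNIV s K B) \<omega> \<partial>M) = (\<integral>\<omega>\<in>E. (\<Prod>k\<in>K. cond_prob (B k) \<omega>) \<partial>M)" .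
qed

lemma distr_Xs:
  assumes j: "j \<in> I"
  shows "distr M borel (Xs j) = distr M borel X"
proof (rule measure_eqI)
  fix C :: "real set"
  assume "C \<in> sets (distr M borel (Xs j))"
  then have C[measurable]: "C \<in> sets borel" by simp
  have "measure M (Xs j -` C \<inter> space M) = measure M (cylinder UNIV (\<lambda>_. j) {0} (\<lambda>_. C))"
    by (auto simp: cylinder_def intro!: arg_cong[where f = "measure M"])
  also have "\<dots> = (\<integral>\<omega>. cond_prob C \<omega> \<partial>M)"
    using j by (subst measure_cylinder) auto
  also have "\<dots> = (\<integral>\<omega>. indicator C (X \<omega>) \<partial>M)"
    unfolding cond_prob_def by (rule F.real_cond_exp_int(2)[OF integrable_indicator_X[OF C]])
  also have "\<dots> = measure M (X -` C \<inter> space M)"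
    by (simp add: indicator_vimage[symmetric] Int_commute)
  finally show "emeasure (distr M borel (Xs j)) C = emeasure (distr M borel X) C"
    using j by (simp add: emeasure_distr emeasure_eq_measure)
qed simp

lemma
  fixes \<phi> :: "real \<Rightarrow> real"
  assumes "j \<in> I" and [measurable]: "\<phi> \<in> borel_measurable borel"
  shows integrable_comp_Xs_iff: "integrable M (\<lambda>\<omega>. \<phi> (Xs j \<omega>)) \<longleftrightarrow> integrable M (\<lambda>\<omega>. \<phi> (X \<omega>))"
    and integral_comp_Xs: "(\<integral>\<omega>. \<phi> (Xs j \<omega>) \<partial>M) = (\<integral>\<omega>. \<phi> (X \<omega>) \<partial>M)"
  using integrable_distr_eq[of "Xs j" M borel \<phi>] integrable_distr_eq[of X M borel \<phi>]
    integral_distr[of "Xs j" M borel \<phi>] integral_distr[of X M borel \<phi>] distr_Xs[OF assms(1)] assms(1)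
  by simp_all

definition cylinder_weight :: "'b set \<Rightarrow> nat set \<Rightarrow> (nat \<Rightarrow> real set) \<Rightarrow> 'a \<Rightarrow> real" where
  "cylinder_weight A K B \<omega> = indicator A (Y \<omega>) * (\<Prod>k\<in>K. cond_prob (B k) \<omega>)"

lemma measurable_cylinder_weight:
  assumes "A \<in> sets borel"
  shows "cylinder_weight A K B \<in> borel_measurable F" "cylinder_weight A K B \<in> borel_measurable M"
proof -
  show F: "cylinder_weight A K B \<in> borel_measurable F"
    using assms unfolding cylinder_weight_def[abs_def] by measurable
  show "cylinder_weight A K B \<in> borel_measurable M"
    by (rule measurable_from_subalg[OF F.subalg F])
qed

lemma AE_cylinder_weight_bounds:
  assumes "finite K" "\<And>k. k \<in> K \<Longrightarrow> B k \<in> sets borel"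
  shows "AE \<omega> in M. 0 \<le> cylinder_weight A K B \<omega> \<and> cylinder_weight A K B \<omega> \<le> 1"
proof -
  have "AE \<omega> in M. 0 \<le> (\<Prod>k\<in>K. cond_prob (B k) \<omega>) \<and> (\<Prod>k\<in>K. cond_prob (B k) \<omega>) \<le> 1"
    using assms by (rule AE_prod_cond_prob_bounds)
  then show ?thesis unfolding cylinder_weight_def by eventually_elim (auto simp: indicator_def)
qed

lemma integral_cylinder_mult_indicator_Xs:
  assumes K: "finite K" "n \<notin> K" "inj_on s (insert n K)" "s ` insert n K \<subseteq> I"
    and A: "A \<in> sets borel" and B: "\<And>k. k \<in> K \<Longrightarrow> B k \<in> sets borel" and C: "C \<in> sets borel"
  shows "(\<integral>\<omega>. indicator (cylinder A s K B) \<omega> * indicator C (Xs (s n) \<omega>) \<partial>M)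
    = (\<integral>\<omega>. cylinder_weight A K B \<omega> * indicator C (X \<omega>) \<partial>M)"
proof -
  have "cylinder A s (insert n K) (B(n := C)) = cylinder A s K B \<inter> Xs (s n) -` C"
    using K(2) by (auto simp: cylinder_def)
  then have "(\<integral>\<omega>. indicator (cylinder A s K B) \<omega> * indicator C (Xs (s n) \<omega>) \<partial>M)
      = (\<integral>\<omega>. indicator (cylinder A s (insert n K) (B(n := C))) \<omega> \<partial>M :: real)"
    by (intro Bochner_Integration.integral_cong) (auto split: split_indicator)
  also have "\<dots> = measure M (cylinder A s (insert n K) (B(n := C)))"
    using K A B C by (simp add: sets_cylinder Int_absorb2[OF cylinder_subset_space])
  also have "\<dots> = (\<integral>\<omega>. cylinder_weight A K B \<omega> * cond_prob C \<omega> \<partial>M)"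
  proof -
    have "(\<Prod>k\<in>K. cond_prob (if k = n then C else B k) \<omega>) = (\<Prod>k\<in>K. cond_prob (B k) \<omega>)" for \<omega>
      using K(2) by (intro prod.cong) auto
    then show ?thesis using K A B C by (subst measure_cylinder) (auto simp: cylinder_weight_def mult_ac)
  qed
  also have "\<dots> = (\<integral>\<omega>. cylinder_weight A K B \<omega> * indicator C (X \<omega>) \<partial>M)"
  proof -
    have [measurable]: "cylinder_weight A K B \<in> borel_measurable M" "C \<in> sets borel"
      using measurable_cylinder_weight[OF A] C by auto
    have "integrable M (\<lambda>\<omega>. cylinder_weight A K B \<omega> * indicator C (X \<omega>))"
    proof (rule integrable_const_bound[where B=1])
      have "AE \<omega> in M. 0 \<le> cylinder_weight A K B \<omega> \<and> cylinder_weight A K B \<omega> \<le> 1"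
        using K(1) B by (rule AE_cylinder_weight_bounds)
      then show "AE \<omega> in M. norm (cylinder_weight A K B \<omega> * indicator C (X \<omega>)) \<le> 1"
        by eventually_elim (auto simp: indicator_def)
    qed measurable
    then show ?thesis
      unfolding cond_prob_def using measurable_cylinder_weight[OF A]
      by (intro F.real_cond_exp_intg(2)) (simp_all, measurable)
  qed
  finally show ?thesis .
qed

text \<open>Weighted by the cylinder, \<open>Xs (s n)\<close> has the law of \<open>X\<close> weighted by the conditional
  probability of the cylinder given \<open>Y\<close>; against weights that depend on \<open>Y\<close> only, \<open>X\<close>
  integrates like \<open>U\<close>.\<close>
lemma integral_cylinder_mult_Xs:
  assumes K: "finite K" "n \<notin> K" "inj_on s (insert n K)" "s ` insert n K \<subseteq> I"
    and A: "A \<in> sets borel" and B: "\<And>k. k \<in> K \<Longrightarrow> B k \<in> sets borel"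
  shows "(\<integral>\<omega>. indicator (cylinder A s K B) \<omega> * Xs (s n) \<omega> \<partial>M)
    = (\<integral>\<omega>. indicator (cylinder A s K B) \<omega> * U \<omega> \<partial>M)"
proof -
  let ?W = "cylinder_weight A K B"
  have [measurable]: "Xs (s n) \<in> borel_measurable M" "?W \<in> borel_measurable M" "A \<in> sets borel"
    using K(4) measurable_cylinder_weight[OF A] A by auto
  have cyl[measurable]: "cylinder A' s K B \<in> sets M" if "A' \<in> sets borel" for A'
    using K B that by (intro sets_cylinder) auto
  have W: "AE \<omega> in M. 0 \<le> ?W \<omega> \<and> ?W \<omega> \<le> 1" using K(1) B by (rule AE_cylinder_weight_bounds)
  have "(\<integral>\<omega>. indicator (cylinder A s K B) \<omega> * Xs (s n) \<omega> \<partial>M) = (\<integral>\<omega>. ?W \<omega> * X \<omega> \<partial>M)"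
  proof (rule integral_weighted_eq_of_weighted_laws_eq)
    show "AE \<omega> in M. 0 \<le> ?W \<omega>" using W by eventually_elim simp
    show "integrable M ?W"
      using W by (intro integrable_const_bound[where B=1]) (auto elim: eventually_mono)
    show "integrable M (indicator (cylinder A s K B) :: 'a \<Rightarrow> real)"
      using cyl[OF A] by (intro integrable_const_bound[where B=1]) auto
  qed (use K A B integral_cylinder_mult_indicator_Xs in simp_all)
  also have "\<dots> = (\<integral>\<omega>. ?W \<omega> * U \<omega> \<partial>M)"
  proof (rule F.real_cond_exp_intg(2)[symmetric])
    show "integrable M (\<lambda>\<omega>. ?W \<omega> * X \<omega>)"
    proof (rule Bochner_Integration.integrable_bound[OF integrable_X])
      show "AE \<omega> in M. norm (?W \<omega> * X \<omega>) \<le> norm (X \<omega>)"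
        using W by eventually_elim (auto simp: abs_mult intro: mult_left_le_one_le)
    qed simp
  qed (use measurable_cylinder_weight[OF A] in simp_all)
  also have "\<dots> = (\<integral>\<omega>. (indicator A (Y \<omega>) * U \<omega>) * real_cond_exp M F (indicator (cylinder UNIV s K B)) \<omega> \<partial>M)"
  proof (rule integral_cong_AE)
    have "AE \<omega> in M. real_cond_exp M F (indicator (cylinder UNIV s K B)) \<omega> = (\<Prod>k\<in>K. cond_prob (B k) \<omega>)"
      using K B by (intro AE_cond_exp_cylinder) (auto simp: inj_on_insert)
    then show "AE \<omega> in M. ?W \<omega> * U \<omega> = indicator A (Y \<omega>) * U \<omega> * real_cond_exp M F (indicator (cylinder UNIV s K B)) \<omega>"
      by eventually_elim (simp add: cylinder_weight_def)
  qed simp_all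
  also have "\<dots> = (\<integral>\<omega>. (indicator A (Y \<omega>) * U \<omega>) * indicator (cylinder UNIV s K B) \<omega> \<partial>M)"
  proof (rule F.real_cond_exp_intg(2))
    show "integrable M (\<lambda>\<omega>. indicator A (Y \<omega>) * U \<omega> * indicator (cylinder UNIV s K B) \<omega>)"
      using cyl[of UNIV]
      by (intro Bochner_Integration.integrable_bound[OF integrable_U]) (auto split: split_indicator)
  qed simp_all
  also have "\<dots> = (\<integral>\<omega>. indicator (cylinder A s K B) \<omega> * U \<omega> \<partial>M)"
    by (intro Bochner_Integration.integral_cong) (auto simp: cylinder_def indicator_def)
  finally show ?thesis .
qed

definition history_cylinders :: "(nat \<Rightarrow> 'i) \<Rightarrow> nat \<Rightarrow> 'a set set" where
  "history_cylinders s n =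
     {cylinder A s {..<n} B | A B. A \<in> sets borel \<and> (\<forall>k<n. B k \<in> sets borel)}"

definition history :: "(nat \<Rightarrow> 'i) \<Rightarrow> nat \<Rightarrow> 'a measure" where
  "history s n = sigma (space M) (history_cylinders s n)"

lemma history_cylinders_subset_sets:
  "s ` {..<n} \<subseteq> I \<Longrightarrow> history_cylinders s n \<subseteq> sets M"
  by (auto simp: history_cylinders_def intro!: sets_cylinder)

lemma Int_stable_history_cylinders: "Int_stable (history_cylinders s n)"
proof (rule Int_stableI)
  fix C D
  assume "C \<in> history_cylinders s n" "D \<in> history_cylinders s n"
  then obtain A B A' B' where "C = cylinder A s {..<n} B" "D = cylinder A' s {..<n} B'"
    "A \<in> sets borel" "A' \<in> sets borel" "\<forall>k<n. B k \<in> sets borel" "\<forall>k<n. B' k \<in> sets borel"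
    by (auto simp: history_cylinders_def)
  moreover have "cylinder A s {..<n} B \<inter> cylinder A' s {..<n} B' = cylinder (A \<inter> A') s {..<n} (\<lambda>k. B k \<inter> B' k)"
    by (auto simp: cylinder_def)
  ultimately show "C \<inter> D \<in> history_cylinders s n"
    unfolding history_cylinders_def
    by (intro CollectI exI[of _ "A \<inter> A'"] exI[of _ "\<lambda>k. B k \<inter> B' k"]) auto
qed

lemma space_in_history_cylinders: "space M \<in> history_cylinders s n"
proof -
  have "space M = cylinder UNIV s {..<n} (\<lambda>_. UNIV)" by (auto simp: cylinder_def)
  then show ?thesis unfolding history_cylinders_def
    by (intro CollectI exI[of _ UNIV] exI[of _ "\<lambda>_. UNIV"]) auto
qed

lemma
  assumes "s ` {..<n} \<subseteq> I"
  shows space_history: "space (history s n) = space M"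
    and sets_history: "sets (history s n) = sigma_sets (space M) (history_cylinders s n)"
  using history_cylinders_subset_sets[OF assms] sets.sets_into_space
  unfolding history_def by (auto intro!: space_measure_of sets_measure_of)

lemma subalgebra_history: "s ` {..<n} \<subseteq> I \<Longrightarrow> subalgebra M (history s n)"
  unfolding subalgebra_def using history_cylinders_subset_sets
  by (simp add: space_history sets_history sets.sigma_sets_subset)

lemma cylinder_in_sets_history:
  assumes "s ` {..<n} \<subseteq> I" "A \<in> sets borel" "\<And>k. k < n \<Longrightarrow> B k \<in> sets borel"
  shows "cylinder A s {..<n} B \<in> sets (history s n)"
  using assms by (auto simp: sets_history history_cylinders_def)

lemma measurable_Y_history:
  assumes "s ` {..<n} \<subseteq> I"
  shows "Y \<in> measurable (history s n) borel"
proof (rule measurableI)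
  fix A :: "'b set"
  assume "A \<in> sets borel"
  moreover have "Y -` A \<inter> space (history s n) = cylinder A s {..<n} (\<lambda>_. UNIV)"
    using assms by (auto simp: space_history cylinder_def)
  ultimately show "Y -` A \<inter> space (history s n) \<in> sets (history s n)"
    using assms by (simp add: cylinder_in_sets_history)
qed simp

lemma measurable_Xs_history:
  assumes "s ` {..<n} \<subseteq> I" "k < n"
  shows "Xs (s k) \<in> borel_measurable (history s n)"
proof (rule measurableI)
  fix C :: "real set"
  assume "C \<in> sets borel"
  moreover have "Xs (s k) -` C \<inter> space (history s n) = cylinder UNIV s {..<n} (\<lambda>j. if j = k then C else UNIV)"
    using assms by (auto simp: space_history cylinder_def)
  ultimately show "Xs (s k) -` C \<inter> space (history s n) \<in> sets (history s n)"
    using assms by (simp add: cylinder_in_sets_history)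
qed simp

lemma measurable_U_history:
  assumes "s ` {..<n} \<subseteq> I"
  shows "U \<in> borel_measurable (history s n)"
proof -
  have "sets F \<subseteq> sets (history s n)"
    using measurable_sets[OF measurable_Y_history[OF assms]] assms
    by (auto simp: sets_sigma_rv[OF measurable_Y] space_history)
  then have "subalgebra (history s n) F"
    using assms by (simp add: subalgebra_def space_history sigma_rv_def)
  then show ?thesis by (rule measurable_from_subalg) simp
qed

lemma AE_cond_exp_history:
  assumes s: "inj_on s {..n}" "s ` {..n} \<subseteq> I"
  shows "AE \<omega> in M. real_cond_exp M (history s n) (Xs (s n)) \<omega> = U \<omega>"
proof -
  have s': "s ` {..<n} \<subseteq> I" using s(2) by auto
  interpret H: sigma_finite_subalgebra M "history s n"
    by (intro sigma_finite_subalgebra_if_subalgebra subalgebra_history s')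
  have "n \<in> {..n}" by simp
  then have sn: "s n \<in> I" using s(2) by blast
  have int_Xs: "integrable M (Xs (s n))"
    using integrable_comp_Xs_iff[OF sn, of "\<lambda>x. x"] integrable_X by simp
  show ?thesis
  proof (rule H.real_cond_exp_charact)
    fix E
    assume "E \<in> sets (history s n)"
    then have E: "E \<in> sigma_sets (space M) (history_cylinders s n)" by (simp add: sets_history[OF s'])
    show "(\<integral>\<omega>\<in>E. Xs (s n) \<omega> \<partial>M) = (\<integral>\<omega>\<in>E. U \<omega> \<partial>M)"
    proof (rule set_integral_eq_on_sigma_sets[OF Int_stable_history_cylinders
          history_cylinders_subset_sets[OF s'] space_in_history_cylinders int_Xs integrable_U _ E])
      fix C
      assume "C \<in> history_cylinders s n"
      then obtain A B where C: "C = cylinder A s {..<n} B" "A \<in> sets borel" "\<forall>k<n. B k \<in> sets borel"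
        by (auto simp: history_cylinders_def)
      have "insert n {..<n} = {..n}" by auto
      then show "(\<integral>\<omega>\<in>C. Xs (s n) \<omega> \<partial>M) = (\<integral>\<omega>\<in>C. U \<omega> \<partial>M)"
        using integral_cylinder_mult_Xs[of "{..<n}" n s A B] s C
        by (simp add: set_lebesgue_integral_def)
    qed
  qed (use int_Xs integrable_U measurable_U_history[OF s'] in simp_all)
qed

lemma
  assumes j: "j \<in> I" and q: "q \<ge> 0"
    and Xq: "integrable M (\<lambda>\<omega>. \<bar>X \<omega>\<bar> powr q)" and Uq: "integrable M (\<lambda>\<omega>. \<bar>U \<omega>\<bar> powr q)"
  shows integrable_abs_powr_centered_Xs: "integrable M (\<lambda>\<omega>. \<bar>Xs j \<omega> - U \<omega>\<bar> powr q)"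
    and integral_abs_powr_centered_Xs_le:
      "(\<integral>\<omega>. \<bar>Xs j \<omega> - U \<omega>\<bar> powr q \<partial>M) \<le> 2 powr q * ((\<integral>\<omega>. \<bar>X \<omega>\<bar> powr q \<partial>M) + (\<integral>\<omega>. \<bar>U \<omega>\<bar> powr q \<partial>M))"
proof -
  have Xsq: "integrable M (\<lambda>\<omega>. \<bar>Xs j \<omega>\<bar> powr q)"
    using integrable_comp_Xs_iff[OF j, of "\<lambda>x. \<bar>x\<bar> powr q"] Xq by simp
  show int: "integrable M (\<lambda>\<omega>. \<bar>Xs j \<omega> - U \<omega>\<bar> powr q)"
    using integrable_abs_powr_add[OF q, of "Xs j" M "\<lambda>\<omega>. - U \<omega>"] Xsq Uq j by simp
  have "(\<integral>\<omega>. \<bar>Xs j \<omega> - U \<omega>\<bar> powr q \<partial>M) \<le> (\<integral>\<omega>. 2 powr q * (\<bar>Xs j \<omega>\<bar> powr q + \<bar>U \<omega>\<bar> powr q) \<partial>M)"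
    using int Xsq Uq abs_add_powr_le[OF q, of "Xs j _" "- U _"] by (intro integral_mono) auto
  also have "\<dots> = 2 powr q * ((\<integral>\<omega>. \<bar>X \<omega>\<bar> powr q \<partial>M) + (\<integral>\<omega>. \<bar>U \<omega>\<bar> powr q \<partial>M))"
    using Xsq Uq integral_comp_Xs[OF j, of "\<lambda>x. \<bar>x\<bar> powr q"] by simp
  finally show "(\<integral>\<omega>. \<bar>Xs j \<omega> - U \<omega>\<bar> powr q \<partial>M) \<le> 2 powr q * ((\<integral>\<omega>. \<bar>X \<omega>\<bar> powr q \<partial>M) + (\<integral>\<omega>. \<bar>U \<omega>\<bar> powr q \<partial>M))" .
qed

lemma integral_history_mult_centered_Xs:
  assumes s: "inj_on s {..n}" "s ` {..n} \<subseteq> I"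
    and f: "f \<in> borel_measurable (history s n)"
    and int: "integrable M (\<lambda>\<omega>. f \<omega> * Xs (s n) \<omega>)" "integrable M (\<lambda>\<omega>. f \<omega> * U \<omega>)"
  shows "(\<integral>\<omega>. f \<omega> * (Xs (s n) \<omega> - U \<omega>) \<partial>M) = 0"
proof -
  have s': "s ` {..<n} \<subseteq> I" using s(2) by auto
  interpret H: sigma_finite_subalgebra M "history s n"
    by (intro sigma_finite_subalgebra_if_subalgebra subalgebra_history s')
  have "s n \<in> I" using s(2) by auto
  then have [measurable]: "Xs (s n) \<in> borel_measurable M" by simp
  have "(\<integral>\<omega>. f \<omega> * Xs (s n) \<omega> \<partial>M) = (\<integral>\<omega>. f \<omega> * real_cond_exp M (history s n) (Xs (s n)) \<omega> \<partial>M)"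
    by (rule H.real_cond_exp_intg(2)[symmetric, OF int(1) f]) simp
  also have "\<dots> = (\<integral>\<omega>. f \<omega> * U \<omega> \<partial>M)"
  proof (rule integral_cong_AE)
    show "AE \<omega> in M. f \<omega> * real_cond_exp M (history s n) (Xs (s n)) \<omega> = f \<omega> * U \<omega>"
      using AE_cond_exp_history[OF s] by eventually_elim simp
    show "(\<lambda>\<omega>. f \<omega> * U \<omega>) \<in> borel_measurable M" using int(2) by simp
  qed (use measurable_from_subalg[OF H.subalg f] in simp)
  finally have "(\<integral>\<omega>. f \<omega> * Xs (s n) \<omega> \<partial>M) = (\<integral>\<omega>. f \<omega> * U \<omega> \<partial>M)" .
  then show ?thesis using int by (simp add: right_diff_distrib)
qed

lemma integrable_abs_powr_sum_centered:
  fixes s :: "nat \<Rightarrow> 'i"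
  assumes s: "s ` {..<N} \<subseteq> I" and q: "q \<ge> 0"
    and Xq: "integrable M (\<lambda>\<omega>. \<bar>X \<omega>\<bar> powr q)" and Uq: "integrable M (\<lambda>\<omega>. \<bar>U \<omega>\<bar> powr q)"
  shows "integrable M (\<lambda>\<omega>. \<bar>\<Sum>k<N. Xs (s k) \<omega> - U \<omega>\<bar> powr q)"
proof (rule integrable_abs_powr_sum[OF q, where Z = "\<lambda>k \<omega>. Xs (s k) \<omega> - U \<omega>"])
  fix k
  assume "k < N"
  then have k: "s k \<in> I" using s by auto
  then show "(\<lambda>\<omega>. Xs (s k) \<omega> - U \<omega>) \<in> borel_measurable M" by simp
  show "integrable M (\<lambda>\<omega>. \<bar>Xs (s k) \<omega> - U \<omega>\<bar> powr q)"
    by (rule integrable_abs_powr_centered_Xs[OF k q Xq Uq])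
qed

lemma integral_abs_powr_sum_centered_le:
  assumes s: "inj_on s {..<N}" "s ` {..<N} \<subseteq> I" and q: "q > 2"
    and Xq: "integrable M (\<lambda>\<omega>. \<bar>X \<omega>\<bar> powr q)" and Uq: "integrable M (\<lambda>\<omega>. \<bar>U \<omega>\<bar> powr q)"
  shows "(\<integral>\<omega>. \<bar>\<Sum>k<N. Xs (s k) \<omega> - U \<omega>\<bar> powr q \<partial>M)
    \<le> moment_const q * (2 powr q * ((\<integral>\<omega>. \<bar>X \<omega>\<bar> powr q \<partial>M) + (\<integral>\<omega>. \<bar>U \<omega>\<bar> powr q \<partial>M))) * real N powr (q / 2)"
proof (rule integral_abs_powr_sum_le[OF q])
  define Z where "Z k \<omega> = Xs (s k) \<omega> - U \<omega>" for k \<omega>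
  have sI: "s k \<in> I" if "k < N" for k using s that by auto
  have Z[measurable]: "Z k \<in> borel_measurable M" if "k < N" for k
    using sI[OF that] unfolding Z_def by measurable
  have Zq: "integrable M (\<lambda>\<omega>. \<bar>Z k \<omega>\<bar> powr q)" if "k < N" for k
    using integrable_abs_powr_centered_Xs[OF sI[OF that] _ Xq Uq] q by (simp add: Z_def)
  fix n
  assume n: "n < N"
  have s_n: "inj_on s {..n}" "s ` {..n} \<subseteq> I" using s n by (auto intro: inj_on_subset)
  have s_n': "s ` {..<n} \<subseteq> I" using s_n(2) by auto
  have "(\<lambda>\<omega>. \<Sum>k<n. Z k \<omega>) \<in> borel_measurable (history s n)"
    unfolding Z_def using measurable_Xs_history[OF s_n'] measurable_U_history[OF s_n'] by measurable
  then have hist: "(\<lambda>\<omega>. signed_powr q (\<Sum>k<n. Z k \<omega>)) \<in> borel_measurable (history s n)"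
    by measurable
  have Sq: "integrable M (\<lambda>\<omega>. \<bar>\<Sum>k<n. Z k \<omega>\<bar> powr q)"
    using q n Z Zq by (intro integrable_abs_powr_sum) auto
  have "(\<integral>\<omega>. signed_powr q (\<Sum>k<n. Z k \<omega>) * Z n \<omega> \<partial>M) = 0"
    unfolding Z_def[of n]
  proof (rule integral_history_mult_centered_Xs[OF s_n hist])
    show "integrable M (\<lambda>\<omega>. signed_powr q (\<Sum>k<n. Z k \<omega>) * Xs (s n) \<omega>)"
      using integrable_comp_Xs_iff[OF sI[OF n], of "\<lambda>x. \<bar>x\<bar> powr q"] Xq Sq q n Z sI[OF n]
      by (intro integrable_signed_powr_mult) auto
    show "integrable M (\<lambda>\<omega>. signed_powr q (\<Sum>k<n. Z k \<omega>) * U \<omega>)"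
      using Uq Sq q n Z by (intro integrable_signed_powr_mult) auto
  qed
  then show "(\<integral>\<omega>. signed_powr q (\<Sum>k<n. Xs (s k) \<omega> - U \<omega>) * (Xs (s n) \<omega> - U \<omega>) \<partial>M) = 0"
    by (simp add: Z_def)
next
  fix k
  assume "k < N"
  then have k: "s k \<in> I" using s by auto
  then show "(\<lambda>\<omega>. Xs (s k) \<omega> - U \<omega>) \<in> borel_measurable M" by simp
  show "integrable M (\<lambda>\<omega>. \<bar>Xs (s k) \<omega> - U \<omega>\<bar> powr q)"
    using integrable_abs_powr_centered_Xs[OF k _ Xq Uq] q by simp
  show "(\<integral>\<omega>. \<bar>Xs (s k) \<omega> - U \<omega>\<bar> powr q \<partial>M) \<le> 2 powr q * ((\<integral>\<omega>. \<bar>X \<omega>\<bar> powr q \<partial>M) + (\<integral>\<omega>. \<bar>U \<omega>\<bar> powr q \<partial>M))"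
    using integral_abs_powr_centered_Xs_le[OF k _ Xq Uq] q by simp
qed

end

section \<open>The antithetic difference\<close>

text \<open>The antithetic difference vanishes unless \<open>c\<close> lies strictly between \<open>e0\<close> and \<open>e1\<close>,
  and then \<open>\<bar>u - c\<bar>\<close> is at most \<open>\<bar>e0 - u\<bar> + \<bar>e1 - u\<bar>\<close>.\<close>
lemma abs_antithetic_powr_le:
  fixes e0 e1 c u t p q :: real
  assumes t: "t > 0" and p: "1 \<le> p" "p \<le> q"
  shows "\<bar>max ((e0 + e1) / 2) c - (1/2) * (max e0 c + max e1 c)\<bar> powr p
    \<le> t powr (p - q) * (\<bar>e0 - u\<bar> + \<bar>e1 - u\<bar>) powr q + (if \<bar>u - c\<bar> < t then t powr p else 0)"
proof -
  define \<Delta> where "\<Delta> = max ((e0 + e1) / 2) c - (1/2) * (max e0 c + max e1 c)"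
  define D where "D = \<bar>e0 - u\<bar> + \<bar>e1 - u\<bar>"
  have "\<bar>\<Delta>\<bar> \<le> \<bar>e0 - e1\<bar>"
    unfolding \<Delta>_def
    by (cases "e0 \<le> c"; cases "e1 \<le> c"; cases "e0 + e1 \<le> 2 * c") (auto simp: max_def abs_if field_simps)
  then have \<Delta>_D: "\<bar>\<Delta>\<bar> \<le> D" unfolding D_def by linarith
  have rhs_nonneg: "0 \<le> t powr (p - q) * D powr q" "0 \<le> (if \<bar>u - c\<bar> < t then t powr p else 0)"
    by simp_all
  have "\<bar>\<Delta>\<bar> powr p \<le> t powr (p - q) * D powr q + (if \<bar>u - c\<bar> < t then t powr p else 0)"
  proof (cases "\<Delta> = 0")
    case False
    then have "min e0 e1 < c \<and> c < max e0 e1"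
      unfolding \<Delta>_def by (cases "e0 \<le> c"; cases "e1 \<le> c"; cases "e0 + e1 \<le> 2 * c") (auto simp: max_def min_def)
    then have c_D: "\<bar>u - c\<bar> \<le> D" unfolding D_def by (auto simp: min_def max_def abs_if split: if_splits)
    have D: "D > 0" using False \<Delta>_D by linarith
    have \<Delta>_p: "\<bar>\<Delta>\<bar> powr p \<le> D powr p" using \<Delta>_D p by (intro powr_mono2) auto
    show ?thesis
    proof (cases "t \<le> D")
      case True
      have "D powr p = D powr q * D powr (p - q)" using D by (simp add: powr_add[symmetric])
      also have "\<dots> \<le> D powr q * t powr (p - q)"
        using True t p by (intro mult_left_mono powr_mono2') auto
      finally show ?thesis using \<Delta>_p rhs_nonneg by (simp add: mult.commute)
    next
      case False
      then have "D powr p \<le> t powr p" using D p by (intro powr_mono2) auto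
      moreover have "\<bar>u - c\<bar> < t" using False c_D by linarith
      ultimately show ?thesis using \<Delta>_p rhs_nonneg(1) by (simp, linarith)
    qed
  qed (use rhs_nonneg in simp)
  then show ?thesis by (simp only: \<Delta>_def D_def)
qed

definition tradeoff_const :: "real \<Rightarrow> real \<Rightarrow> real \<Rightarrow> real \<Rightarrow> real" where
  "tradeoff_const q \<delta> \<rho> C = C + \<rho> + ((\<delta> / 2) powr (1 - q) * C + \<rho>) / \<delta> powr (q + 1)"

lemma threshold_powr_balance:
  fixes w p q :: real
  assumes "w > 0" "q \<ge> 0"
  defines "t \<equiv> w powr (- (q / (2 * (q + 1))))"
  shows "t powr (p - q) * w powr (- q / 2) = w powr (- (q * (p + 1) / (2 * (q + 1))))"
    and "t powr (p + 1) = w powr (- (q * (p + 1) / (2 * (q + 1))))"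
proof -
  have "- (q / (2 * (q + 1))) * (p - q) + - q / 2 = - (q * (p + 1) / (2 * (q + 1)))"
    using assms(2) by (simp add: field_simps)
  then show "t powr (p - q) * w powr (- q / 2) = w powr (- (q * (p + 1) / (2 * (q + 1))))"
    using assms(1) by (simp add: t_def powr_powr powr_add[symmetric])
  show "t powr (p + 1) = w powr (- (q * (p + 1) / (2 * (q + 1))))"
    using assms(1) by (simp add: t_def powr_powr)
qed

text \<open>The threshold \<open>w powr (- (q / (2 * (q + 1))))\<close> balances both terms; if it is not below
  \<open>\<delta>\<close>, then \<open>w\<close> is bounded and \<open>t = \<delta> / 2\<close> works.\<close>
lemma exists_threshold_tradeoff_le:
  fixes q p w \<delta> \<rho> C :: real
  assumes p: "1 \<le> p" "p \<le> q" and w: "w \<ge> 1" and \<delta>: "0 < \<delta>" "\<delta> \<le> 1"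
    and C: "C \<ge> 0" and \<rho>: "\<rho> \<ge> 0"
  shows "\<exists>t. 0 < t \<and> t < \<delta> \<and> t powr (p - q) * C * w powr (- q / 2) + \<rho> * t powr (p + 1)
    \<le> tradeoff_const q \<delta> \<rho> C * w powr (- (q * (p + 1) / (2 * (q + 1))))"
proof -
  define E where "E = q * (p + 1) / (2 * (q + 1))"
  define t0 where "t0 = w powr (- (q / (2 * (q + 1))))"
  have balance: "t0 powr (p - q) * w powr (- q / 2) = w powr (- E)" "t0 powr (p + 1) = w powr (- E)"
    using threshold_powr_balance[of w q p] w p unfolding E_def t0_def by auto
  have extra_nonneg: "0 \<le> ((\<delta> / 2) powr (1 - q) * C + \<rho>) / \<delta> powr (q + 1)"
    using C \<rho> by simp
  show ?thesis
  proof (cases "t0 < \<delta>")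
    case True
    have "t0 powr (p - q) * C * w powr (- q / 2) + \<rho> * t0 powr (p + 1)
        = C * (t0 powr (p - q) * w powr (- q / 2)) + \<rho> * t0 powr (p + 1)"
      by (simp only: mult_ac)
    also have "\<dots> = (C + \<rho>) * w powr (- E)" by (simp only: balance distrib_right)
    also have "\<dots> \<le> tradeoff_const q \<delta> \<rho> C * w powr (- E)"
      using extra_nonneg by (intro mult_right_mono) (auto simp: tradeoff_const_def)
    finally have "t0 powr (p - q) * C * w powr (- q / 2) + \<rho> * t0 powr (p + 1)
        \<le> tradeoff_const q \<delta> \<rho> C * w powr (- E)" .
    moreover have "0 < t0" using w by (simp add: t0_def)
    ultimately show ?thesis using True unfolding E_def by blast
  next
    case False
    define t where "t = \<delta> / 2"
    have t: "0 < t" "t < \<delta>" "t \<le> 1" using \<delta> by (auto simp: t_def)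
    have "t powr (p - q) \<le> t powr (1 - q)" using t p by (intro powr_mono') auto
    moreover have "w powr (- q / 2) \<le> 1"
      using w p by (simp add: powr_minus inverse_le_1_iff ge_one_powr_ge_zero)
    moreover have "t powr (p + 1) \<le> 1" using t p by (intro powr_le1) auto
    ultimately have "t powr (p - q) * C * w powr (- q / 2) + \<rho> * t powr (p + 1) \<le> t powr (1 - q) * C * 1 + \<rho> * 1"
      using C \<rho> by (intro add_mono mult_mono[OF mult_right_mono] mult_left_mono) simp_all
    also have "\<dots> \<le> ((\<delta> / 2) powr (1 - q) * C + \<rho>) / \<delta> powr (q + 1) * w powr (- E)"
    proof -
      have "\<delta> powr (q + 1) \<le> \<delta> powr (p + 1)" using \<delta> p by (intro powr_mono') auto
      also have "\<dots> \<le> t0 powr (p + 1)" using False \<delta> p by (intro powr_mono2) auto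
      finally have "1 \<le> w powr (- E) / \<delta> powr (q + 1)" using \<delta> balance(2) by simp
      then have "(t powr (1 - q) * C + \<rho>) * 1 \<le> (t powr (1 - q) * C + \<rho>) * (w powr (- E) / \<delta> powr (q + 1))"
        using C \<rho> by (intro mult_left_mono) simp_all
      then show ?thesis by (simp add: t_def)
    qed
    also have "\<dots> \<le> tradeoff_const q \<delta> \<rho> C * w powr (- E)"
      using C \<rho> by (intro mult_right_mono) (auto simp: tradeoff_const_def)
    finally show ?thesis using t unfolding E_def by blast
  qed
qed

lemma Mlev_powr_le:
  fixes E q :: real
  assumes "M0 \<ge> 1" "l \<ge> 1" "0 \<le> E" "E \<le> q / 2"
  shows "real (Mlev M0 (l - 1)) powr (- E) \<le> 2 powr (q / 2) * 2 powr (- (E * real l))"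
proof -
  have "2 powr (real l - 1) = 2 ^ (l - 1)"
    using assms by (simp add: powr_realpow[symmetric] of_nat_diff)
  also have "\<dots> \<le> real (Mlev M0 (l - 1))" using assms by (simp add: Mlev_def)
  finally have "real (Mlev M0 (l - 1)) powr (- E) \<le> (2 powr (real l - 1)) powr (- E)"
    using assms by (intro powr_mono2') auto
  also have "\<dots> = 2 powr E * 2 powr (- (E * real l))"
    by (simp add: powr_powr powr_add[symmetric] algebra_simps)
  also have "\<dots> \<le> 2 powr (q / 2) * 2 powr (- (E * real l))"
    using assms by (intro mult_right_mono powr_mono) auto
  finally show ?thesis .
qed

lemma exists_threshold_level_le:
  fixes q p \<delta> \<rho> C :: real
  assumes "M0 \<ge> 1" "l \<ge> 1" "1 \<le> p" "p \<le> q" "0 < \<delta>" "\<delta> \<le> 1" "C \<ge> 0" "\<rho> \<ge> 0"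
  shows "\<exists>t. 0 < t \<and> t < \<delta> \<and>
    t powr (p - q) * C * real (Mlev M0 (l - 1)) powr (- q / 2) + \<rho> * t powr (p + 1)
      \<le> 2 powr (q / 2) * tradeoff_const q \<delta> \<rho> C * 2 powr (- (q * (1 + 1 / p) * p * real l / (2 * (q + 1))))"
proof -
  define E where "E = q * (p + 1) / (2 * (q + 1))"
  have E: "0 \<le> E" "E \<le> q / 2" using assms by (auto simp: E_def field_simps)
  have "1 \<le> Mlev M0 (l - 1)" using assms by (simp add: Mlev_def)
  then have "1 \<le> real (Mlev M0 (l - 1))" by simp
  then obtain t where t: "0 < t" "t < \<delta>"
    and bound: "t powr (p - q) * C * real (Mlev M0 (l - 1)) powr (- q / 2) + \<rho> * t powr (p + 1)
      \<le> tradeoff_const q \<delta> \<rho> C * real (Mlev M0 (l - 1)) powr (- E)"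
    using exists_threshold_tradeoff_le[of p q _ \<delta> C \<rho>] assms unfolding E_def by blast
  have "tradeoff_const q \<delta> \<rho> C \<ge> 0" using assms by (simp add: tradeoff_const_def)
  then have "tradeoff_const q \<delta> \<rho> C * real (Mlev M0 (l - 1)) powr (- E)
      \<le> tradeoff_const q \<delta> \<rho> C * (2 powr (q / 2) * 2 powr (- (E * real l)))"
    using Mlev_powr_le[OF assms(1,2) E] by (intro mult_left_mono)
  moreover have "E * real l = q * (1 + 1 / p) * p * real l / (2 * (q + 1))"
  proof -
    have "(1 + 1 / p) * p = p + 1" using assms by (simp add: field_simps)
    then show ?thesis by (simp add: E_def mult.assoc)
  qed
  ultimately show ?thesis using t bound by (intro exI[of _ t]) (simp add: mult_ac)
qed

lemma abs_Delta_ant_powr_le: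
  fixes t p q u :: real and M0 l :: nat
  defines "N \<equiv> Mlev M0 (l - 1)"
  assumes t: "t > 0" and p: "1 \<le> p" "p \<le> q" and N: "N > 0"
  shows "\<bar>Delta_ant M0 l Xs c \<omega>\<bar> powr p \<le> t powr (p - q) * 2 powr q * real N powr (- q)
      * (\<bar>\<Sum>k<N. Xs (0, k) \<omega> - u\<bar> powr q + \<bar>\<Sum>k<N. Xs (1, k) \<omega> - u\<bar> powr q)
    + (if \<bar>u - c \<omega>\<bar> < t then t powr p else 0)"
proof -
  have q: "q \<ge> 0" using p by simp
  have Ehat: "\<bar>Ehat M0 l Xs i \<omega> - u\<bar> powr q = real N powr (- q) * \<bar>\<Sum>k<N. Xs (i, k) \<omega> - u\<bar> powr q" for i
  proof -
    have "Ehat M0 l Xs i \<omega> - u = (\<Sum>k<N. Xs (i, k) \<omega> - u) / real N"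
      using N by (simp add: N_def Ehat_def sum_subtractf field_simps)
    then have "\<bar>Ehat M0 l Xs i \<omega> - u\<bar> powr q = (\<bar>\<Sum>k<N. Xs (i, k) \<omega> - u\<bar> / real N) powr q"
      by (simp add: abs_divide)
    also have "\<dots> = \<bar>\<Sum>k<N. Xs (i, k) \<omega> - u\<bar> powr q / real N powr q" by (rule powr_divide)
    finally show ?thesis by (simp add: powr_minus divide_inverse mult.commute)
  qed
  have "(\<bar>Ehat M0 l Xs 0 \<omega> - u\<bar> + \<bar>Ehat M0 l Xs 1 \<omega> - u\<bar>) powr q
      \<le> 2 powr q * (\<bar>Ehat M0 l Xs 0 \<omega> - u\<bar> powr q + \<bar>Ehat M0 l Xs 1 \<omega> - u\<bar> powr q)"
    using abs_add_powr_le[OF q, of "\<bar>Ehat M0 l Xs 0 \<omega> - u\<bar>" "\<bar>Ehat M0 l Xs 1 \<omega> - u\<bar>"] by simp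
  also have "\<dots> = 2 powr q * real N powr (- q)
      * (\<bar>\<Sum>k<N. Xs (0, k) \<omega> - u\<bar> powr q + \<bar>\<Sum>k<N. Xs (1, k) \<omega> - u\<bar> powr q)"
    by (simp only: Ehat distrib_left mult.assoc)
  finally have "t powr (p - q) * (\<bar>Ehat M0 l Xs 0 \<omega> - u\<bar> + \<bar>Ehat M0 l Xs 1 \<omega> - u\<bar>) powr q
      \<le> t powr (p - q) * 2 powr q * real N powr (- q)
        * (\<bar>\<Sum>k<N. Xs (0, k) \<omega> - u\<bar> powr q + \<bar>\<Sum>k<N. Xs (1, k) \<omega> - u\<bar> powr q)"
    by (simp add: mult.assoc mult_left_mono)
  then show ?thesis
    using abs_antithetic_powr_le[OF t p, of "Ehat M0 l Xs 0 \<omega>" "Ehat M0 l Xs 1 \<omega>" "c \<omega>" u]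
    unfolding Delta_ant_def by simp
qed

lemma nn_integral_abs_Delta_ant_powr_le:
  fixes M :: "'a measure" and Y :: "'a \<Rightarrow> 'b::topological_space" and X c :: "'a \<Rightarrow> real"
    and Xs :: "nat \<times> nat \<Rightarrow> 'a \<Rightarrow> real" and q p t :: real
  defines "U \<equiv> real_cond_exp M (sigma_rv M Y) X"
  defines "m \<equiv> 2 powr q * ((\<integral>\<omega>. \<bar>X \<omega>\<bar> powr q \<partial>M) + (\<integral>\<omega>. \<bar>U \<omega>\<bar> powr q \<partial>M))"
  assumes family: "cond_iid_family M Y X ({0, 1} \<times> {..<Mlev M0 (l - 1)}) Xs"
    and M0: "M0 \<ge> 1" and q: "q > 2" and p: "1 \<le> p" "p \<le> q" and t: "t > 0"
    and Xq: "integrable M (\<lambda>\<omega>. \<bar>X \<omega>\<bar> powr q)" and Uq: "integrable M (\<lambda>\<omega>. \<bar>U \<omega>\<bar> powr q)"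
    and [measurable]: "c \<in> borel_measurable M"
  shows "(\<integral>\<^sup>+\<omega>. ennreal (\<bar>Delta_ant M0 l Xs c \<omega>\<bar> powr p) \<partial>M)
    \<le> ennreal (t powr (p - q) * (2 powr (q + 1) * moment_const q * m) * real (Mlev M0 (l - 1)) powr (- q / 2)
      + t powr p * measure M {\<omega> \<in> space M. \<bar>U \<omega> - c \<omega>\<bar> < t})"
proof -
  interpret cond_iid_family M Y X "{0, 1} \<times> {..<Mlev M0 (l - 1)}" Xs by (rule family)
  define N where "N = Mlev M0 (l - 1)"
  have N: "N > 0" using M0 by (simp add: N_def Mlev_def)
  define S where "S i \<omega> = \<bar>\<Sum>k<N. Xs (i, k) \<omega> - U \<omega>\<bar> powr q" for i \<omega>
  have S: "integrable M (S i)" "(\<integral>\<omega>. S i \<omega> \<partial>M) \<le> moment_const q * m * real N powr (q / 2)"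
    if "i \<in> {0, 1}" for i :: nat
  proof -
    have s: "inj_on (Pair i) {..<N}" "Pair i ` {..<N} \<subseteq> {0, 1} \<times> {..<Mlev M0 (l - 1)}"
      using that by (auto simp: N_def inj_on_def)
    show "integrable M (S i)"
      using integrable_abs_powr_sum_centered[OF s(2) _ Xq] q Uq unfolding S_def U_def by simp
    show "(\<integral>\<omega>. S i \<omega> \<partial>M) \<le> moment_const q * m * real N powr (q / 2)"
      using integral_abs_powr_sum_centered_le[OF s q Xq] Uq unfolding S_def m_def U_def by simp
  qed
  define E where "E = {\<omega> \<in> space M. \<bar>U \<omega> - c \<omega>\<bar> < t}"
  have [measurable]: "E \<in> sets M" unfolding E_def U_def by measurable
  define g where "g = (\<lambda>\<omega>. t powr (p - q) * 2 powr q * real N powr (- q) * (S 0 \<omega> + S 1 \<omega>)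
    + t powr p * indicator E \<omega>)"
  have E_int: "integrable M (indicator E :: 'a \<Rightarrow> real)"
    by (intro integrable_const_bound[where B=1]) auto
  then have g_int: "integrable M g" using S[of 0] S[of 1] by (simp add: g_def)
  have "(\<integral>\<^sup>+\<omega>. ennreal (\<bar>Delta_ant M0 l Xs c \<omega>\<bar> powr p) \<partial>M) \<le> (\<integral>\<^sup>+\<omega>. ennreal (g \<omega>) \<partial>M)"
  proof (intro nn_integral_mono ennreal_leI)
    fix \<omega>
    assume "\<omega> \<in> space M"
    then show "\<bar>Delta_ant M0 l Xs c \<omega>\<bar> powr p \<le> g \<omega>"
      using abs_Delta_ant_powr_le[OF t p, of M0 l Xs c \<omega> "U \<omega>"] N
      by (simp add: g_def S_def N_def E_def indicator_def split: if_splits)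
  qed
  also have "\<dots> = ennreal (\<integral>\<omega>. g \<omega> \<partial>M)"
    using g_int by (intro nn_integral_eq_integral) (auto simp: g_def S_def)
  also have "(\<integral>\<omega>. g \<omega> \<partial>M)
      = t powr (p - q) * 2 powr q * real N powr (- q) * ((\<integral>\<omega>. S 0 \<omega> \<partial>M) + (\<integral>\<omega>. S 1 \<omega> \<partial>M))
        + t powr p * measure M E"
    using S[of 0] S[of 1] E_int by (simp add: g_def)
  also have "\<dots> \<le> t powr (p - q) * 2 powr q * real N powr (- q) * (2 * (moment_const q * m * real N powr (q / 2)))
        + t powr p * measure M E"
    using S(2)[of 0] S(2)[of 1] by (intro add_mono mult_left_mono) auto
  also have "\<dots> = t powr (p - q) * (2 powr (q + 1) * moment_const q * m) * (real N powr (- q) * real N powr (q / 2))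
        + t powr p * measure M E"
    by (simp only: powr_add mult_ac powr_one)
  also have "real N powr (- q) * real N powr (q / 2) = real N powr (- q / 2)"
    using N by (simp add: powr_add[symmetric])
  finally show ?thesis by (simp add: N_def E_def ennreal_leI)
qed

definition antithetic_rate_const :: "real \<Rightarrow> real \<Rightarrow> real \<Rightarrow> real \<Rightarrow> real" where
  "antithetic_rate_const q \<delta> \<rho> m = 2 powr (q / 2) * tradeoff_const q \<delta> \<rho> (2 powr (q + 1) * moment_const q * m)"

lemma antithetic_rate_const_pos:
  assumes "m \<ge> 0" "0 < \<delta>" "\<rho> > 0"
  shows "antithetic_rate_const q \<delta> \<rho> m > 0"
proof -
  have "2 powr (q + 1) * moment_const q * m \<ge> 0"
    using assms by (simp add: moment_const_def)
  then show ?thesis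
    unfolding antithetic_rate_const_def tradeoff_const_def using assms
    by (intro mult_pos_pos add_pos_nonneg add_nonneg_pos) auto
qed

lemma nn_integral_abs_Delta_ant_powr_rate:
  fixes M :: "'a measure" and Y :: "'a \<Rightarrow> 'b::topological_space" and X c :: "'a \<Rightarrow> real"
    and Xs :: "nat \<times> nat \<Rightarrow> 'a \<Rightarrow> real" and q p \<delta> \<rho> :: real
  defines "U \<equiv> real_cond_exp M (sigma_rv M Y) X"
  defines "m \<equiv> 2 powr q * ((\<integral>\<omega>. \<bar>X \<omega>\<bar> powr q \<partial>M) + (\<integral>\<omega>. \<bar>U \<omega>\<bar> powr q \<partial>M))"
  assumes family: "cond_iid_family M Y X ({0, 1} \<times> {..<Mlev M0 (l - 1)}) Xs"
    and M0: "M0 \<ge> 1" and l: "l \<ge> 1" and q: "q > 2" and p: "1 \<le> p" "p \<le> q"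
    and Xq: "integrable M (\<lambda>\<omega>. \<bar>X \<omega>\<bar> powr q)" and Uq: "integrable M (\<lambda>\<omega>. \<bar>U \<omega>\<bar> powr q)"
    and [measurable]: "c \<in> borel_measurable M"
    and \<delta>: "0 < \<delta>" "\<delta> \<le> 1" and \<rho>: "\<rho> \<ge> 0"
    and margin: "\<And>t. 0 < t \<Longrightarrow> t < \<delta> \<Longrightarrow> measure M {\<omega> \<in> space M. \<bar>U \<omega> - c \<omega>\<bar> < t} \<le> \<rho> * t"
  shows "(\<integral>\<^sup>+\<omega>. ennreal (\<bar>Delta_ant M0 l Xs c \<omega>\<bar> powr p) \<partial>M)
    \<le> ennreal (antithetic_rate_const q \<delta> \<rho> m * 2 powr (- (q * (1 + 1 / p) * p * real l / (2 * (q + 1)))))"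
proof -
  define C where "C = 2 powr (q + 1) * moment_const q * m"
  have "C \<ge> 0" unfolding C_def m_def moment_const_def by (intro mult_nonneg_nonneg add_nonneg_nonneg) auto
  from exists_threshold_level_le[OF M0 l p \<delta> this \<rho>] obtain t where t: "0 < t" "t < \<delta>" and
    "t powr (p - q) * C * real (Mlev M0 (l - 1)) powr (- q / 2) + \<rho> * t powr (p + 1)
      \<le> 2 powr (q / 2) * tradeoff_const q \<delta> \<rho> C * 2 powr (- (q * (1 + 1 / p) * p * real l / (2 * (q + 1))))"
    by blast
  then have rate: "t powr (p - q) * C * real (Mlev M0 (l - 1)) powr (- q / 2) + \<rho> * t powr (p + 1)
      \<le> antithetic_rate_const q \<delta> \<rho> m * 2 powr (- (q * (1 + 1 / p) * p * real l / (2 * (q + 1))))"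
    by (simp only: antithetic_rate_const_def C_def)
  have "t powr p * measure M {\<omega> \<in> space M. \<bar>U \<omega> - c \<omega>\<bar> < t} \<le> t powr p * (\<rho> * t)"
    using margin[OF t] by (intro mult_left_mono) auto
  also have "\<dots> = \<rho> * t powr (p + 1)" using t by (simp add: powr_add)
  finally have "(\<integral>\<^sup>+\<omega>. ennreal (\<bar>Delta_ant M0 l Xs c \<omega>\<bar> powr p) \<partial>M)
      \<le> ennreal (t powr (p - q) * C * real (Mlev M0 (l - 1)) powr (- q / 2) + \<rho> * t powr (p + 1))"
    using nn_integral_abs_Delta_ant_powr_le[OF family M0 q p t(1) Xq Uq[unfolded U_def], of c]
    unfolding C_def m_def U_def by (simp add: order_trans[OF _ ennreal_leI])
  then show ?thesis using rate by (simp add: order_trans[OF _ ennreal_leI])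
qed

theorem proposition2p3:
  fixes M :: "'a measure" and Y :: "'a \<Rightarrow> real ^ 'd" and X :: "'a \<Rightarrow> real"
    and \<pi> :: "real ^ 'd \<Rightarrow> real" and q :: real and M0 :: nat
  assumes "prob_space M"
    and "Y \<in> borel_measurable M" and "X \<in> borel_measurable M" and "\<pi> \<in> borel_measurable borel"
    and "q > 2"
    and "integrable M (\<lambda>\<omega>. \<bar>X \<omega>\<bar> powr q)"
    and "integrable M (\<lambda>\<omega>. \<bar>\<pi> (Y \<omega>)\<bar> powr q)"
    and "\<exists>\<delta>>0. \<exists>\<rho>>0. \<forall>x. 0 < x \<and> x < \<delta> \<longrightarrow>
           measure M {\<omega> \<in> space M. \<bar>real_cond_exp M (sigma_rv M Y) X \<omega> - \<pi> (Y \<omega>)\<bar> < x} \<le> \<rho> * x"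
    and "M0 \<ge> 1"
  shows "\<exists>b1>0. \<forall>l\<ge>1. \<forall>p. 1 \<le> p \<and> p \<le> q \<longrightarrow>
           (\<forall>Xs :: nat \<times> nat \<Rightarrow> 'a \<Rightarrow> real.
              cond_iid_copies M Y X ({0,1} \<times> {..<Mlev M0 (l - 1)}) Xs \<longrightarrow>
              (\<integral>\<^sup>+\<omega>. ennreal (\<bar>Delta_ant M0 l Xs (\<lambda>\<omega>. \<pi> (Y \<omega>)) \<omega>\<bar> powr p) \<partial>M)
                \<le> ennreal (b1 * 2 powr (- (q * (1 + 1 / p) * p * real l / (2 * (q + 1))))))"
proof -
  interpret prob_space M by fact
  note [measurable] = assms(2-4)
  obtain \<delta>0 \<rho> where \<delta>0: "\<delta>0 > 0" and \<rho>: "\<rho> > 0" and margin: "\<And>x. 0 < x \<Longrightarrow> x < \<delta>0 \<Longrightarrow>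
      measure M {\<omega> \<in> space M. \<bar>real_cond_exp M (sigma_rv M Y) X \<omega> - \<pi> (Y \<omega>)\<bar> < x} \<le> \<rho> * x"
    using assms(8) by blast
  interpret F: sigma_finite_subalgebra M "sigma_rv M Y"
    by (intro sigma_finite_subalgebra_if_subalgebra subalgebra_sigma_rv assms(2))
  have q: "q > 2" "q \<ge> 1" and Xq: "integrable M (\<lambda>\<omega>. \<bar>X \<omega>\<bar> powr q)" using assms(5,6) by auto
  have X: "integrable M X" by (rule integrable_of_integrable_abs_powr[OF q(2) _ Xq]) simp
  have Uq: "integrable M (\<lambda>\<omega>. \<bar>real_cond_exp M (sigma_rv M Y) X \<omega>\<bar> powr q)"
    by (rule F.integrable_abs_powr_real_cond_exp[OF prob_space_axioms q(2) _ Xq]) simp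
  let ?m = "2 powr q * ((\<integral>\<omega>. \<bar>X \<omega>\<bar> powr q \<partial>M) + (\<integral>\<omega>. \<bar>real_cond_exp M (sigma_rv M Y) X \<omega>\<bar> powr q \<partial>M))"
  show ?thesis
  proof (intro exI[of _ "antithetic_rate_const q (min \<delta>0 1) \<rho> ?m"] conjI allI impI)
    show "antithetic_rate_const q (min \<delta>0 1) \<rho> ?m > 0"
      using \<delta>0 \<rho> by (intro antithetic_rate_const_pos) auto
    fix l p and Xs :: "nat \<times> nat \<Rightarrow> 'a \<Rightarrow> real"
    assume "1 \<le> l" "1 \<le> p \<and> p \<le> q" "cond_iid_copies M Y X ({0, 1} \<times> {..<Mlev M0 (l - 1)}) Xs"
    moreover have "cond_iid_family M Y X ({0, 1} \<times> {..<Mlev M0 (l - 1)}) Xs"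
      by unfold_locales (use X \<open>cond_iid_copies M Y X _ Xs\<close> in simp_all)
    ultimately show "(\<integral>\<^sup>+\<omega>. ennreal (\<bar>Delta_ant M0 l Xs (\<lambda>\<omega>. \<pi> (Y \<omega>)) \<omega>\<bar> powr p) \<partial>M)
        \<le> ennreal (antithetic_rate_const q (min \<delta>0 1) \<rho> ?m * 2 powr (- (q * (1 + 1 / p) * p * real l / (2 * (q + 1)))))"
      using nn_integral_abs_Delta_ant_powr_rate[of M Y X M0 l Xs q p "\<lambda>\<omega>. \<pi> (Y \<omega>)" "min \<delta>0 1" \<rho>]
        assms(9) q(1) Xq Uq \<delta>0 \<rho> margin by simp
  qed
qed

end
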